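(* Let $(M,\mathrm{dist})$ be a compact metric space endowed with a finite Borel measure $\mu$ such that $\mu(U)>0$ for every nonempty open set $U\subset M$, and let $f\colon M\to M$ be a homeomorphism. Let $\Lambda\subset M$ be a transitive attractor of $f$ such that $f$ does not have the shadowing property on $\Lambda$. Then there exists $\varepsilon_0>0$ such that for every $y_0\in D(\Lambda)$ there exists $d_0>0$ such that for every $d\in(0,d_0)$, $$p(y_0,d,\varepsilon_0)=0,$$ i.e. a random $d$-pseudotrajectory starting at $y_0$ can be $\varepsilon_0$-shadowed with probability $0$.
   Context: For $a>0$ and $x\in M$, $B(a,x)$ denotes the open ball of radius $a$ centered at $x$. For $d>0$, a sequence $\{y_n\}_{n\ge 0}$ (or finite $\{y_n\}_{n=0}^N$) in $M$ is a $d$-pseudotrajectory if $\mathrm{dist}(y_{n+1},f(y_n))\le d$ for all admissible $n$. It is $\varepsilon$-shadowed if there is $x_0\in M$ with $\mathrm{dist}(y_n,f^n(x_0))\le\varepsilon$ for all admissible $n$. A compact set $\Lambda$ with $f(\Lambda)=\Lambda$ is an attractor if there exists an open neighborhood $U$ of $\Lambda$ with $f(U)\subset U$ and $\bigcap_{n\ge0}f^n(U)=\Lambda$. Its domain of attraction is $D(\Lambda)=\{x\in M: \mathrm{dist}(f^n(x),\Lambda)\to 0 \text{ as } n\to\infty\}$. $\Lambda$ is transitive if there exists $r\in\Lambda$ with $\Lambda=\overline{\{f^n(r):n\ge0\}}$. The map $f$ has the shadowing property on $\Lambda$ if for every $\varepsilon>0$ there exists $d>0$ such that for every $d$-pseudotrajectory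 $\{y_n\}_{n\ge0}\subset\Lambda$ there exists $x_0\in M$ (not necessarily in $\Lambda$) with $\mathrm{dist}(y_n,f^n(x_0))\le\varepsilon$ for all $n\ge0$. Random pseudotrajectories: for $y_0\in M$ and $d>0$, let $\Omega(y_0,d)$ be the set of all infinite $d$-pseudotrajectories starting at $y_0$, equipped with the probability measure $P^{y_0,d}$ of the Markov chain starting at $y_0$ with transition law: given $y_n$, the point $y_{n+1}$ is chosen uniformly in $B(d,f(y_n))$ with respect to $\mu$, i.e. $P(y_{n+1}\in A\mid y_n)=\mu(A\cap B(d,f(y_n)))/\mu(B(d,f(y_n)))$ for measurable $A\subset M$. For $\varepsilon>0$, $Sh(y_0,d,\varepsilon)\subset\Omega(y_0,d)$ is the (measurable) set of pseudotrajectories that can be $\varepsilon$-shadowed, and $p(y_0,d,\varepsilon)=P^{y_0,d}(Sh(y_0,d,\varepsilon))$. *)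

theory Defs
  imports "HOL-Probability.Probability"
begin

text \<open>Open ball B(a,x) is the library's ball x a. M is the whole type 'a.\<close>

definition is_pseudotrajectory :: "('a::metric_space \<Rightarrow> 'a) \<Rightarrow> real \<Rightarrow> (nat \<Rightarrow> 'a) \<Rightarrow> bool" where
  "is_pseudotrajectory f d y \<longleftrightarrow> (\<forall>n. dist (y (Suc n)) (f (y n)) \<le> d)"

definition shadowed :: "('a::metric_space \<Rightarrow> 'a) \<Rightarrow> real \<Rightarrow> (nat \<Rightarrow> 'a) \<Rightarrow> bool" where
  "shadowed f eps y \<longleftrightarrow> (\<exists>x0. \<forall>n. dist (y n) ((f ^^ n) x0) \<le> eps)"

definition is_attractor :: "('a::metric_space \<Rightarrow> 'a) \<Rightarrow> 'a set \<Rightarrow> bool" where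
  "is_attractor f \<Lambda> \<longleftrightarrow> compact \<Lambda> \<and> f ` \<Lambda> = \<Lambda> \<and>
     (\<exists>U. open U \<and> \<Lambda> \<subseteq> U \<and> f ` U \<subseteq> U \<and> (\<Inter>n. (f ^^ n) ` U) = \<Lambda>)"

definition domain_of_attraction :: "('a::metric_space \<Rightarrow> 'a) \<Rightarrow> 'a set \<Rightarrow> 'a set" where
  "domain_of_attraction f \<Lambda> = {x. (\<lambda>n. infdist ((f ^^ n) x) \<Lambda>) \<longlonglongrightarrow> 0}"

definition transitive_set :: "('a::metric_space \<Rightarrow> 'a) \<Rightarrow> 'a set \<Rightarrow> bool" where
  "transitive_set f \<Lambda> \<longleftrightarrow> (\<exists>r\<in>\<Lambda>. \<Lambda> = closure (range (\<lambda>n. (f ^^ n) r)))"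

definition shadowing_on :: "('a::metric_space \<Rightarrow> 'a) \<Rightarrow> 'a set \<Rightarrow> bool" where
  "shadowing_on f \<Lambda> \<longleftrightarrow> (\<forall>eps>0. \<exists>d>0. \<forall>y. (\<forall>n. y n \<in> \<Lambda>) \<and> is_pseudotrajectory f d y
      \<longrightarrow> shadowed f eps y)"

definition Omega :: "('a::metric_space \<Rightarrow> 'a) \<Rightarrow> 'a \<Rightarrow> real \<Rightarrow> (nat \<Rightarrow> 'a) set" where
  "Omega f y0 d = {y. y 0 = y0 \<and> is_pseudotrajectory f d y}"

definition Sh :: "('a::metric_space \<Rightarrow> 'a) \<Rightarrow> 'a \<Rightarrow> real \<Rightarrow> real \<Rightarrow> (nat \<Rightarrow> 'a) set" where
  "Sh f y0 d eps = {y \<in> Omega f y0 d. shadowed f eps y}"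

text \<open>Transition probability: y_{n+1} uniform in B(d, f y_n) w.r.t. mu.\<close>
definition trans_prob :: "'a::metric_space measure \<Rightarrow> ('a \<Rightarrow> 'a) \<Rightarrow> real \<Rightarrow> 'a \<Rightarrow> 'a set \<Rightarrow> real" where
  "trans_prob \<mu> f d y A = measure \<mu> (A \<inter> ball (f y) d) / measure \<mu> (ball (f y) d)"

text \<open>P is the law P^{y0,d} of the Markov chain started at y0 with the above transition law,
  as a probability measure on sequences (product sigma-algebra). The Markov property is stated
  as: for every n, every event B depending only on coordinates 0..n and every Borel A,
  P(B and y_{n+1} in A) = integral over B of the transition probability from y_n into A.
  This determines P uniquely.\<close>
definition random_pt_law :: "'a::metric_space measure \<Rightarrow> ('a \<Rightarrow> 'a) \<Rightarrow> 'a \<Rightarrow> real \<Rightarrow> (nat \<Rightarrow> 'a) measure \<Rightarrow> bool" where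
  "random_pt_law \<mu> f y0 d P \<longleftrightarrow>
     prob_space P \<and> sets P = sets (Pi\<^sub>M UNIV (\<lambda>_. borel)) \<and>
     emeasure P {y. y 0 = y0} = 1 \<and>
     (\<forall>n C A. C \<in> sets (Pi\<^sub>M {..n} (\<lambda>_. borel)) \<longrightarrow> A \<in> sets borel \<longrightarrow>
        emeasure P {y. restrict y {..n} \<in> C \<and> y (Suc n) \<in> A}
          = (\<integral>\<^sup>+ y. indicator {y. restrict y {..n} \<in> C} y * ennreal (trans_prob \<mu> f d (y n) A) \<partial>P))"

end

theory Submission
  imports Defs
begin

text \<open>
  Since f does not have the shadowing property on \<Lambda>, compactness yields \<epsilon> > 0 such that for
  every \<eta> > 0 some finite \<eta>-chain w starting in \<Lambda> is not 2\<epsilon>-shadowed by any orbit.  A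
  d-pseudotrajectory from a point of D(\<Lambda>) with small d is eventually trapped in a compact set Q
  that is attracted to \<Lambda> uniformly.  By transitivity of \<Lambda>, every centre of a finite \<rho>-net of
  Q is the start of a (d/2)-chain of one common length L that runs through w.  Whenever the random
  pseudotrajectory is in Q, it follows the \<rho>-tube around one of these chains for the next L steps
  with probability at least a^L, where a > 0 is a lower bound for the \<mu>-measure of the \<rho>-balls
  relative to \<mu>(M).  Following a tube means passing \<rho>-close to w, which rules out
  \<epsilon>-shadowing.  Hence the probability of being \<epsilon>-shadowable is at most (1 - a^L)^m for every m.
\<close>

section \<open>Compactness and distance to a set\<close>

lemma infdist_lessE:
  assumes "infdist x A < e" "A \<noteq> {}"
  obtains a where "a \<in> A" "dist x a < e"
proof -
  have "(INF a\<in>A. dist x a) < e" using assms by (simp add: infdist_def)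
  then show ?thesis using assms(2) that by (auto simp: cINF_less_iff)
qed

lemma compact_UNIV_decseq_closed_Inter:
  fixes F :: "nat \<Rightarrow> 'a::topological_space set"
  assumes cpt: "compact (UNIV::'a set)" and "\<And>i. closed (F i)" "decseq F" "\<And>i. F i \<noteq> {}"
  obtains x where "\<And>i. x \<in> F i"
proof -
  have "UNIV \<inter> (\<Inter>i\<in>UNIV. F i) \<noteq> {}"
  proof (rule compact_imp_fip_image[OF cpt])
    fix I :: "nat set" assume "finite I"
    then obtain m where "\<forall>i\<in>I. i \<le> m" using finite_nat_set_iff_bounded_le by blast
    then have "F m \<subseteq> (\<Inter>i\<in>I. F i)" using \<open>decseq F\<close> by (auto simp: decseq_def)
    then show "UNIV \<inter> (\<Inter>i\<in>I. F i) \<noteq> {}" using assms(4)[of m] by blast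
  qed (use assms(2) in auto)
  then show ?thesis using that by blast
qed

lemma compact_UNIV_Inter_closed_subset_open:
  fixes E :: "nat \<Rightarrow> 'a::topological_space set"
  assumes cpt: "compact (UNIV::'a set)" and "\<And>j. closed (E j)" "open V" "(\<Inter>j. E j) \<subseteq> V"
  obtains J where "(\<Inter>j\<le>J. E j) \<subseteq> V"
proof (rule ccontr)
  assume "\<not> thesis"
  then have ne: "(\<Inter>j\<le>i. E j) - V \<noteq> {}" for i using that by blast
  have "closed ((\<Inter>j\<le>i. E j) - V)" for i using assms(2,3) by (intro closed_Diff closed_INT) auto
  moreover have "decseq (\<lambda>i. (\<Inter>j\<le>i. E j) - V)" by (auto simp: decseq_def)
  ultimately obtain x where "x \<in> (\<Inter>j\<le>i. E j) - V" for i
    using compact_UNIV_decseq_closed_Inter[OF cpt, of "\<lambda>i. (\<Inter>j\<le>i. E j) - V"] ne by blast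
  then show False using assms(4) by blast
qed

lemma infdist_le_subset_open:
  fixes \<Lambda> :: "'a::metric_space set"
  assumes "compact (UNIV::'a set)" "closed \<Lambda>" "\<Lambda> \<noteq> {}" "open V" "\<Lambda> \<subseteq> V"
  obtains e where "e > 0" "{x. infdist x \<Lambda> \<le> e} \<subseteq> V"
proof (cases "- V = {}")
  case True then show ?thesis using that[of 1] by auto
next
  case False
  have "compact (- V)" using compact_Int_closed[OF assms(1) closed_Compl[OF assms(4)]] by simp
  then obtain x where x: "x \<in> - V" "\<forall>y\<in>- V. infdist x \<Lambda> \<le> infdist y \<Lambda>"
    using continuous_attains_inf[OF _ False continuous_on_infdist[OF continuous_on_id]] by blast
  have "infdist x \<Lambda> > 0" using infdist_pos_not_in_closed[OF assms(2,3)] x assms(5) by blast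
  then show ?thesis using x by (intro that[of "infdist x \<Lambda> / 2"]) force+
qed

section \<open>Finite pseudo-orbits and shadowing\<close>

definition pseudo_chain :: "('a::metric_space \<Rightarrow> 'a) \<Rightarrow> real \<Rightarrow> nat \<Rightarrow> (nat \<Rightarrow> 'a) \<Rightarrow> bool" where
  "pseudo_chain f \<eta> L p \<longleftrightarrow> (\<forall>i<L. dist (p (Suc i)) (f (p i)) < \<eta>)"

definition chain_reachable :: "('a::metric_space \<Rightarrow> 'a) \<Rightarrow> real \<Rightarrow> 'a \<Rightarrow> 'a \<Rightarrow> bool" where
  "chain_reachable f \<eta> u v \<longleftrightarrow> (\<exists>L p. p 0 = u \<and> p L = v \<and> pseudo_chain f \<eta> L p)"

definition shadowed_upto :: "('a::metric_space \<Rightarrow> 'a) \<Rightarrow> real \<Rightarrow> nat \<Rightarrow> (nat \<Rightarrow> 'a) \<Rightarrow> bool" where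
  "shadowed_upto f \<epsilon> N y \<longleftrightarrow> (\<exists>x. \<forall>i\<le>N. dist (y i) ((f ^^ i) x) \<le> \<epsilon>)"

lemma pseudo_chain_mono:
  "pseudo_chain f \<eta> L p \<Longrightarrow> \<eta> \<le> \<eta>' \<Longrightarrow> L' \<le> L \<Longrightarrow> pseudo_chain f \<eta>' L' p"
  unfolding pseudo_chain_def by (meson order.strict_trans2)

lemma pseudo_chain_of_pseudotrajectory:
  "is_pseudotrajectory f d z \<Longrightarrow> d < \<eta> \<Longrightarrow> pseudo_chain f \<eta> L (\<lambda>i. z (m + i))"
  unfolding is_pseudotrajectory_def pseudo_chain_def by (metis add_Suc_right le_less_trans)

lemma pseudo_chain_orbit: "\<eta> > 0 \<Longrightarrow> pseudo_chain f \<eta> L (\<lambda>i. (f ^^ i) u)"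
  by (simp add: pseudo_chain_def)

lemma pseudo_chain_append:
  assumes "pseudo_chain f \<eta> L p" "pseudo_chain f \<eta> L' q" "p L = q 0"
  shows "pseudo_chain f \<eta> (L + L') (\<lambda>i. if i \<le> L then p i else q (i - L))"
  unfolding pseudo_chain_def
proof (intro allI impI)
  fix i assume i: "i < L + L'"
  show "dist (if Suc i \<le> L then p (Suc i) else q (Suc i - L)) (f (if i \<le> L then p i else q (i - L))) < \<eta>"
  proof (cases "Suc i \<le> L")
    case True then show ?thesis using assms(1) by (simp add: pseudo_chain_def)
  next
    case False
    then have "(if i \<le> L then p i else q (i - L)) = q (i - L)" "Suc i - L = Suc (i - L)" "i - L < L'"
      using i assms(3) by (cases "i = L"; simp)+
    then show ?thesis using False assms(2) by (simp add: pseudo_chain_def)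
  qed
qed

lemma pseudo_chain_extend:
  assumes "pseudo_chain f \<eta> L p" "L \<le> L'" "\<eta> > 0"
  obtains p' where "pseudo_chain f \<eta> L' p'" "\<And>i. i \<le> L \<Longrightarrow> p' i = p i"
proof -
  have "pseudo_chain f \<eta> (L + (L' - L)) (\<lambda>i. if i \<le> L then p i else (f ^^ (i - L)) (p L))"
    by (rule pseudo_chain_append[OF assms(1) pseudo_chain_orbit[OF assms(3)]]) simp
  then show ?thesis using assms(2) that by simp
qed

lemma chain_reachable_trans:
  assumes "chain_reachable f \<eta> u v" "chain_reachable f \<eta> v w"
  shows "chain_reachable f \<eta> u w"
proof -
  obtain L p L' q where p: "p 0 = u" "p L = v" "pseudo_chain f \<eta> L p"
    and q: "q 0 = v" "q L' = w" "pseudo_chain f \<eta> L' q"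
    using assms unfolding chain_reachable_def by blast
  show ?thesis unfolding chain_reachable_def
    using p q pseudo_chain_append[OF p(3) q(3)]
    by (intro exI[of _ "L + L'"] exI[of _ "\<lambda>i. if i \<le> L then p i else q (i - L)"]) auto
qed

lemma chain_reachable_orbit: "\<eta> > 0 \<Longrightarrow> chain_reachable f \<eta> u ((f ^^ n) u)"
  unfolding chain_reachable_def using pseudo_chain_orbit
  by (intro exI[of _ n] exI[of _ "\<lambda>i. (f ^^ i) u"]) auto

lemma chain_reachable_jump: "dist v (f u) < \<eta> \<Longrightarrow> chain_reachable f \<eta> u v"
  unfolding chain_reachable_def pseudo_chain_def
  by (intro exI[of _ 1] exI[of _ "\<lambda>i. if i = 0 then u else v"]) auto

lemma pseudo_chain_through:
  assumes "chain_reachable f \<eta> z (w 0)" "pseudo_chain f \<eta> N w" "\<eta> > 0"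
  shows "\<forall>\<^sub>F L in sequentially.
    \<exists>p s. p 0 = z \<and> pseudo_chain f \<eta> L p \<and> s + N \<le> L \<and> (\<forall>i\<le>N. p (s + i) = w i)"
proof -
  obtain L1 p where p: "p 0 = z" "p L1 = w 0" "pseudo_chain f \<eta> L1 p"
    using assms(1) unfolding chain_reachable_def by blast
  define r where "r i = (if i \<le> L1 then p i else w (i - L1))" for i
  have r: "pseudo_chain f \<eta> (L1 + N) r" "r 0 = z" "\<forall>i\<le>N. r (L1 + i) = w i"
    using pseudo_chain_append[OF p(3) assms(2) p(2)] p unfolding r_def by auto
  have "\<exists>p s. p 0 = z \<and> pseudo_chain f \<eta> L p \<and> s + N \<le> L \<and> (\<forall>i\<le>N. p (s + i) = w i)"
    if L: "L1 + N \<le> L" for L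
  proof -
    obtain p' where "pseudo_chain f \<eta> L p'" "\<And>i. i \<le> L1 + N \<Longrightarrow> p' i = r i"
      using pseudo_chain_extend[OF r(1) L assms(3)] by blast
    then show ?thesis using r L by (intro exI[of _ p'] exI[of _ L1]) auto
  qed
  then show ?thesis unfolding eventually_sequentially by blast
qed

lemma shadowed_upto_mono: "shadowed_upto f \<epsilon> N y \<Longrightarrow> \<epsilon> \<le> \<epsilon>' \<Longrightarrow> shadowed_upto f \<epsilon>' N y"
  unfolding shadowed_upto_def by (meson order_trans)

lemma shadowed_upto_of_close_segment:
  assumes "shadowed f \<epsilon> y" "\<forall>i\<le>N. dist (w i) (y (t + i)) < \<rho>"
  shows "shadowed_upto f (\<epsilon> + \<rho>) N w"
proof -
  obtain x where x: "\<forall>n. dist (y n) ((f ^^ n) x) \<le> \<epsilon>" using assms(1) unfolding shadowed_def by blast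
  have "dist (w i) ((f ^^ i) ((f ^^ t) x)) \<le> \<epsilon> + \<rho>" if "i \<le> N" for i
  proof -
    have "dist (w i) ((f ^^ (t + i)) x) \<le> dist (w i) (y (t + i)) + dist (y (t + i)) ((f ^^ (t + i)) x)"
      by (rule dist_triangle)
    then have "dist (w i) ((f ^^ (t + i)) x) \<le> \<epsilon> + \<rho>" using x assms(2) that by (smt (verit))
    then show ?thesis by (simp add: funpow_add add.commute)
  qed
  then show ?thesis unfolding shadowed_upto_def by blast
qed

lemma not_follows_of_unshadowable:
  assumes "shadowed f \<epsilon> y" "\<not> shadowed_upto f (2 * \<epsilon>) N w" "\<rho> \<le> \<epsilon>"
    and "s + N \<le> L" "\<And>i. i \<le> N \<Longrightarrow> p (s + i) = w i"
  shows "\<not> (\<forall>i\<le>L. y (t + i) \<in> ball (p i) \<rho>)"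
proof
  assume "\<forall>i\<le>L. y (t + i) \<in> ball (p i) \<rho>"
  then have "\<forall>i\<le>N. dist (w i) (y (t + s + i)) < \<rho>"
    using assms(4,5) by (metis add.assoc add_le_cancel_left dist_commute le_trans mem_ball)
  then have "shadowed_upto f (\<epsilon> + \<rho>) N w" by (rule shadowed_upto_of_close_segment[OF assms(1)])
  then show False using assms(2,3) shadowed_upto_mono[of f "\<epsilon> + \<rho>" N w "2 * \<epsilon>"] by simp
qed

section \<open>Continuous maps of a compact metric space\<close>

text \<open>Without second countability, the distance need not be measurable for the product \<sigma>-algebra;
  a countable dense set is used instead.\<close>

lemma sets_dist_le_of_countable_dense:
  fixes g h :: "'b \<Rightarrow> 'a::metric_space" and D :: "'a set"
  assumes D: "countable D" "\<And>a e. e > 0 \<Longrightarrow> \<exists>p\<in>D. dist p a < e"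
    and g: "g \<in> measurable M borel" and h: "h \<in> measurable M borel"
  shows "{x\<in>space M. dist (g x) (h x) \<le> r} \<in> sets M"
proof -
  define A where "A k = (\<Union>p\<in>D. (g -` ball p (1 / real (Suc k)) \<inter> space M) \<inter> (h -` ball p (r + 1 / real (Suc k)) \<inter> space M))"
    for k :: nat
  have "A k \<in> sets M" for k
    unfolding A_def using measurable_sets[OF g borel_open] measurable_sets[OF h borel_open]
    by (intro sets.countable_UN''[OF D(1)]) (simp add: sets.Int)
  then have "(\<Inter>k. A k) \<in> sets M" by (intro sets.countable_INT) auto
  moreover have "{x\<in>space M. dist (g x) (h x) \<le> r} = (\<Inter>k. A k)"
  proof (intro equalityI subsetI)
    fix x assume x: "x \<in> {x\<in>space M. dist (g x) (h x) \<le> r}"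
    show "x \<in> (\<Inter>k. A k)"
    proof
      fix k :: nat
      obtain p where p: "p \<in> D" "dist p (g x) < 1 / real (Suc k)" using D(2)[of "1 / real (Suc k)" "g x"] by auto
      have "dist p (h x) \<le> dist p (g x) + dist (g x) (h x)" by (rule dist_triangle)
      then have "dist p (h x) < r + 1 / real (Suc k)" using p x by simp
      then show "x \<in> A k" using p x unfolding A_def by (auto simp: dist_commute)
    qed
  next
    fix x assume x: "x \<in> (\<Inter>k. A k)"
    have "dist (g x) (h x) \<le> r + e" if "e > 0" for e
    proof -
      obtain k where k: "inverse (real (Suc k)) < e / 2" using reals_Archimedean[of "e / 2"] \<open>e > 0\<close> by auto
      obtain p where "dist (g x) p < 1 / real (Suc k)" "dist (h x) p < r + 1 / real (Suc k)"
        using x unfolding A_def by (auto simp: dist_commute)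
      moreover have "dist (g x) (h x) \<le> dist (g x) p + dist (h x) p" by (rule dist_triangle2)
      moreover have "1 / real (Suc k) < e / 2" using k by (simp add: inverse_eq_divide)
      ultimately show ?thesis by linarith
    qed
    then show "x \<in> {x\<in>space M. dist (g x) (h x) \<le> r}"
      using x field_le_epsilon unfolding A_def by blast
  qed
  ultimately show ?thesis by simp
qed

lemma sets_coordinate:
  fixes B :: "'a::topological_space set"
  shows "B \<in> sets borel \<Longrightarrow> {y. y n \<in> B} \<in> sets (Pi\<^sub>M UNIV (\<lambda>_. borel))"
  using measurable_sets[OF measurable_component_singleton[of n UNIV "\<lambda>_. borel"]]
  by (simp add: space_PiM vimage_def)

locale compact_dynamics =
  fixes f :: "'a::metric_space \<Rightarrow> 'a"
  assumes compact_UNIV: "compact (UNIV :: 'a set)"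
    and continuous_f: "continuous_on UNIV f"
begin

lemma continuous_on_funpow: "continuous_on UNIV (f ^^ n)"
  by (induction n) (auto intro: continuous_on_compose2[OF continuous_f] continuous_on_id)

lemma uniformly_continuous_funpow:
  assumes "e > 0"
  obtains \<delta> where "\<delta> > 0" "\<And>u v. dist u v < \<delta> \<Longrightarrow> dist ((f ^^ n) u) ((f ^^ n) v) < e"
  using compact_uniformly_continuous[OF continuous_on_funpow compact_UNIV] assms
  unfolding uniformly_continuous_on_def by (metis UNIV_I dist_commute)

lemma uniformly_continuous_funpow_upto:
  assumes "e > 0"
  obtains \<delta> where "\<delta> > 0" "\<And>u v n. dist u v < \<delta> \<Longrightarrow> n \<le> N \<Longrightarrow> dist ((f ^^ n) u) ((f ^^ n) v) < e"
proof (induction N arbitrary: thesis)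
  case 0
  show ?case by (rule 0[of e]) (use assms in auto)
next
  case (Suc N)
  obtain \<delta>1 where "\<delta>1 > 0" "\<And>u v n. dist u v < \<delta>1 \<Longrightarrow> n \<le> N \<Longrightarrow> dist ((f ^^ n) u) ((f ^^ n) v) < e"
    using Suc.IH by blast
  moreover obtain \<delta>2 where "\<delta>2 > 0" "\<And>u v. dist u v < \<delta>2 \<Longrightarrow> dist ((f ^^ Suc N) u) ((f ^^ Suc N) v) < e"
    using uniformly_continuous_funpow[OF assms] by blast
  ultimately show ?case by (intro Suc.prems[of "min \<delta>1 \<delta>2"]) (auto simp: le_Suc_eq)
qed

lemma closed_funpow_image: "closed S \<Longrightarrow> closed ((f ^^ n) ` S)"
  using compact_Int_closed[OF compact_UNIV, of S]
  by (intro compact_imp_closed compact_continuous_image continuous_on_subset[OF continuous_on_funpow]) auto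

lemma pseudo_chain_tracks_orbit:
  "\<tau> > 0 \<Longrightarrow> \<exists>\<delta>>0. \<forall>z j. pseudo_chain f \<delta> N z \<longrightarrow> j \<le> N \<longrightarrow> dist (z j) ((f ^^ j) (z 0)) < \<tau>"
proof (induction N arbitrary: \<tau>)
  case 0
  then show ?case by (intro exI[of _ 1]) auto
next
  case (Suc N)
  obtain \<delta>f where \<delta>f: "\<delta>f > 0" "\<And>u v. dist u v < \<delta>f \<Longrightarrow> dist (f u) (f v) < \<tau> / 2"
    using uniformly_continuous_funpow[of "\<tau> / 2" 1] Suc.prems by auto
  obtain \<delta>1 where \<delta>1: "\<delta>1 > 0"
    "\<And>z j. pseudo_chain f \<delta>1 N z \<Longrightarrow> j \<le> N \<Longrightarrow> dist (z j) ((f ^^ j) (z 0)) < min \<tau> \<delta>f"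
    using Suc.IH[of "min \<tau> \<delta>f"] Suc.prems \<delta>f(1) by auto
  define \<delta> where "\<delta> = min \<delta>1 (\<tau> / 2)"
  have "dist (z j) ((f ^^ j) (z 0)) < \<tau>" if z: "pseudo_chain f \<delta> (Suc N) z" and j: "j \<le> Suc N" for z j
  proof -
    have IH: "dist (z i) ((f ^^ i) (z 0)) < min \<tau> \<delta>f" if "i \<le> N" for i
      using \<delta>1(2)[OF pseudo_chain_mono[OF z] that] unfolding \<delta>_def by simp
    show ?thesis
    proof (cases "j = Suc N")
      case True
      have "dist (z (Suc N)) ((f ^^ Suc N) (z 0))
          \<le> dist (z (Suc N)) (f (z N)) + dist (f (z N)) (f ((f ^^ N) (z 0)))"
        by (simp add: dist_triangle)
      also have "\<dots> < \<delta> + \<tau> / 2"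
        using z \<delta>f(2) IH[of N] by (intro add_strict_mono) (auto simp: pseudo_chain_def)
      also have "\<dots> \<le> \<tau>" unfolding \<delta>_def by simp
      finally show ?thesis using True by simp
    qed (use IH j in \<open>auto simp: le_Suc_eq\<close>)
  qed
  moreover have "\<delta> > 0" using \<delta>1(1) Suc.prems unfolding \<delta>_def by simp
  ultimately show ?case by blast
qed

lemma pseudo_chain_tube_step:
  assumes "\<eta> < d"
  obtains \<rho>0 where "\<rho>0 > 0" "\<And>\<rho> L p i x. \<rho> \<le> \<rho>0 \<Longrightarrow> pseudo_chain f \<eta> L p \<Longrightarrow> i < L \<Longrightarrow>
    x \<in> ball (p i) \<rho> \<Longrightarrow> ball (p (Suc i)) \<rho> \<subseteq> ball (f x) d"
proof -
  obtain \<delta> where \<delta>: "\<delta> > 0" "\<And>u v. dist u v < \<delta> \<Longrightarrow> dist (f u) (f v) < (d - \<eta>) / 2"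
    using uniformly_continuous_funpow[of "(d - \<eta>) / 2" 1] assms by auto
  define \<rho>0 where "\<rho>0 = min \<delta> ((d - \<eta>) / 2)"
  have "ball (p (Suc i)) \<rho> \<subseteq> ball (f x) d"
    if "\<rho> \<le> \<rho>0" "pseudo_chain f \<eta> L p" "i < L" "x \<in> ball (p i) \<rho>" for \<rho> L p i x
  proof
    fix w assume "w \<in> ball (p (Suc i)) \<rho>"
    moreover have "dist (p (Suc i)) (f (p i)) < \<eta>" using that(2,3) unfolding pseudo_chain_def by blast
    moreover have "dist (f x) (f (p i)) < (d - \<eta>) / 2"
      using \<delta>(2) that(1,4) unfolding \<rho>0_def by (simp add: dist_commute)
    moreover have "dist (f x) w \<le> dist (f x) (f (p i)) + dist (f (p i)) (p (Suc i)) + dist (p (Suc i)) w"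
      using dist_triangle[of "f x" w "f (p i)"] dist_triangle[of "f (p i)" w "p (Suc i)"] by linarith
    ultimately show "w \<in> ball (f x) d" using that(1) unfolding \<rho>0_def by (simp add: dist_commute)
  qed
  moreover have "\<rho>0 > 0" unfolding \<rho>0_def using \<delta>(1) assms by simp
  ultimately show ?thesis using that by blast
qed

lemma closed_shadowing_points: "closed {x. \<forall>i\<le>N. dist (y i) ((f ^^ i) x) \<le> \<epsilon>}"
proof -
  have "{x. \<forall>i\<le>N. dist (y i) ((f ^^ i) x) \<le> \<epsilon>} = (\<Inter>i\<le>N. {x. dist (y i) ((f ^^ i) x) \<le> \<epsilon>})" by auto
  moreover have "closed {x. dist (y i) ((f ^^ i) x) \<le> \<epsilon>}" for i
    by (intro closed_Collect_le continuous_on_const continuous_on_dist continuous_on_funpow)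
  ultimately show ?thesis by (simp add: closed_INT)
qed

lemma shadowed_iff_shadowed_upto: "shadowed f \<epsilon> y \<longleftrightarrow> (\<forall>N. shadowed_upto f \<epsilon> N y)"
proof
  show "shadowed f \<epsilon> y \<Longrightarrow> \<forall>N. shadowed_upto f \<epsilon> N y"
    unfolding shadowed_def shadowed_upto_def by blast
next
  define F where "F N = {x. \<forall>i\<le>N. dist (y i) ((f ^^ i) x) \<le> \<epsilon>}" for N
  assume "\<forall>N. shadowed_upto f \<epsilon> N y"
  then have "F N \<noteq> {}" for N unfolding F_def shadowed_upto_def by blast
  moreover have "closed (F N)" for N unfolding F_def by (rule closed_shadowing_points)
  moreover have "decseq F" unfolding F_def decseq_def by auto
  ultimately obtain x where "x \<in> F N" for N
    using compact_UNIV_decseq_closed_Inter[OF compact_UNIV, of F] by blast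
  then show "shadowed f \<epsilon> y" unfolding shadowed_def F_def by blast
qed

lemma shadowed_upto_limit:
  assumes "\<And>e. \<epsilon> < e \<Longrightarrow> shadowed_upto f e N y"
  shows "shadowed_upto f \<epsilon> N y"
proof -
  define F where "F k = {x. \<forall>i\<le>N. dist (y i) ((f ^^ i) x) \<le> \<epsilon> + 1 / real (Suc k)}" for k :: nat
  have "1 / real (Suc n) \<le> 1 / real (Suc m)" if "m \<le> n" for m n :: nat
    using that by (simp add: frac_le)
  then have "decseq F" unfolding F_def decseq_def by (fastforce intro: order_trans)
  moreover have "F k \<noteq> {}" for k using assms[of "\<epsilon> + 1 / real (Suc k)"] unfolding F_def shadowed_upto_def by auto
  moreover have "closed (F k)" for k unfolding F_def by (rule closed_shadowing_points)
  ultimately obtain x where x: "x \<in> F k" for k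
    using compact_UNIV_decseq_closed_Inter[OF compact_UNIV, of F] by blast
  have "dist (y i) ((f ^^ i) x) \<le> \<epsilon> + e" if "i \<le> N" "e > 0" for i e
  proof -
    obtain k where "inverse (real (Suc k)) < e" using reals_Archimedean \<open>e > 0\<close> by blast
    then show ?thesis using x[of k] that(1) unfolding F_def by (auto simp: inverse_eq_divide)
  qed
  then show ?thesis unfolding shadowed_upto_def by (blast intro: field_le_epsilon)
qed

lemma not_shadowing_on_finite_witness:
  assumes "\<not> shadowing_on f \<Lambda>"
  obtains \<epsilon> where "\<epsilon> > 0"
    "\<And>\<eta>. \<eta> > 0 \<Longrightarrow> \<exists>w N. w 0 \<in> \<Lambda> \<and> pseudo_chain f \<eta> N w \<and> \<not> shadowed_upto f \<epsilon> N w"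
proof -
  obtain \<epsilon> where \<epsilon>: "\<epsilon> > 0"
    "\<And>d. d > 0 \<Longrightarrow> \<exists>y. (\<forall>n. y n \<in> \<Lambda>) \<and> is_pseudotrajectory f d y \<and> \<not> shadowed f \<epsilon> y"
    using assms unfolding shadowing_on_def by blast
  have "\<exists>w N. w 0 \<in> \<Lambda> \<and> pseudo_chain f \<eta> N w \<and> \<not> shadowed_upto f \<epsilon> N w" if "\<eta> > 0" for \<eta>
  proof -
    obtain y where y: "y 0 \<in> \<Lambda>" "is_pseudotrajectory f (\<eta> / 2) y" "\<not> shadowed f \<epsilon> y"
      using \<epsilon>(2)[of "\<eta> / 2"] \<open>\<eta> > 0\<close> by auto
    then obtain N where "\<not> shadowed_upto f \<epsilon> N y" using shadowed_iff_shadowed_upto by blast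
    moreover have "dist (y (Suc i)) (f (y i)) < \<eta>" for i
      using y(2) \<open>\<eta> > 0\<close> unfolding is_pseudotrajectory_def by (smt (verit) field_sum_of_halves)
    then have "pseudo_chain f \<eta> N y" unfolding pseudo_chain_def by blast
    ultimately show ?thesis using y(1) by blast
  qed
  with \<epsilon>(1) show ?thesis by (rule that)
qed

lemma countable_dense_subset:
  obtains D :: "'a set" where "countable D" "\<And>a e. e > 0 \<Longrightarrow> \<exists>p\<in>D. dist p a < e"
proof -
  have "\<forall>n. \<exists>k::'a set. finite k \<and> UNIV \<subseteq> (\<Union>x\<in>k. ball x (1 / real (Suc n)))"
    using seq_compact_imp_totally_bounded[OF compact_imp_seq_compact[OF compact_UNIV]] by simp
  then obtain C :: "nat \<Rightarrow> 'a set" where C: "\<And>n. finite (C n)" "\<And>n. UNIV \<subseteq> (\<Union>x\<in>C n. ball x (1 / real (Suc n)))"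
    by (metis choice)
  have "\<exists>p\<in>(\<Union>n. C n). dist p a < e" if "e > 0" for a e
  proof -
    obtain n where n: "inverse (real (Suc n)) < e" using reals_Archimedean \<open>e > 0\<close> by blast
    have "a \<in> (\<Union>x\<in>C n. ball x (1 / real (Suc n)))" using C(2)[of n] by blast
    then obtain p where "p \<in> C n" "dist p a < 1 / real (Suc n)" by auto
    moreover have "1 / real (Suc n) < e" using n by (simp add: inverse_eq_divide)
    ultimately have "p \<in> (\<Union>n. C n)" "dist p a < e" by auto
    then show ?thesis by blast
  qed
  moreover have "countable (\<Union>n. C n)" using C(1) by (simp add: countable_finite)
  ultimately show ?thesis using that by blast
qed

lemma shadowed_iff_dense_approx:
  assumes D: "\<And>a e. e > 0 \<Longrightarrow> \<exists>p\<in>D. dist p a < e"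
  shows "shadowed f \<epsilon> y \<longleftrightarrow> (\<forall>N k. \<exists>x\<in>D. \<forall>n\<le>N. dist ((f ^^ n) x) (y n) < \<epsilon> + 1 / real (Suc k))"
proof
  assume "shadowed f \<epsilon> y"
  then obtain x0 where x0: "\<forall>n. dist (y n) ((f ^^ n) x0) \<le> \<epsilon>" unfolding shadowed_def by blast
  show "\<forall>N k. \<exists>x\<in>D. \<forall>n\<le>N. dist ((f ^^ n) x) (y n) < \<epsilon> + 1 / real (Suc k)"
  proof (intro allI)
    fix N k
    obtain \<delta> where \<delta>: "\<delta> > 0" "\<And>u v n. dist u v < \<delta> \<Longrightarrow> n \<le> N \<Longrightarrow> dist ((f ^^ n) u) ((f ^^ n) v) < 1 / real (Suc k)"
      using uniformly_continuous_funpow_upto[of "1 / real (Suc k)" N] by auto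
    obtain x where x: "x \<in> D" "dist x x0 < \<delta>" using D[OF \<delta>(1)] by blast
    have "dist ((f ^^ n) x) (y n) < \<epsilon> + 1 / real (Suc k)" if "n \<le> N" for n
      using dist_triangle2[of "(f ^^ n) x" "y n" "(f ^^ n) x0"] \<delta>(2)[OF x(2) that] x0[rule_format, of n]
      by linarith
    then show "\<exists>x\<in>D. \<forall>n\<le>N. dist ((f ^^ n) x) (y n) < \<epsilon> + 1 / real (Suc k)" using x(1) by blast
  qed
next
  assume y: "\<forall>N k. \<exists>x\<in>D. \<forall>n\<le>N. dist ((f ^^ n) x) (y n) < \<epsilon> + 1 / real (Suc k)"
  have "shadowed_upto f e N y" if "\<epsilon> < e" for N e
  proof -
    obtain k where "inverse (real (Suc k)) < e - \<epsilon>"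
      using reals_Archimedean[of "e - \<epsilon>"] \<open>\<epsilon> < e\<close> by auto
    then have k: "1 / real (Suc k) < e - \<epsilon>" by (simp add: inverse_eq_divide)
    obtain x where x: "\<And>n. n \<le> N \<Longrightarrow> dist ((f ^^ n) x) (y n) < \<epsilon> + 1 / real (Suc k)"
      using y by blast
    have "dist (y n) ((f ^^ n) x) \<le> e" if "n \<le> N" for n
      using x[OF that] k by (simp add: dist_commute)
    then show ?thesis unfolding shadowed_upto_def by blast
  qed
  then show "shadowed f \<epsilon> y" by (simp add: shadowed_iff_shadowed_upto shadowed_upto_limit)
qed

lemma sets_shadowed: "{y. shadowed f \<epsilon> y} \<in> sets (Pi\<^sub>M UNIV (\<lambda>_. borel :: 'a measure))"
proof -
  let ?M = "Pi\<^sub>M UNIV (\<lambda>_. borel :: 'a measure)"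
  obtain D :: "'a set" where D: "countable D" "\<And>a e. e > 0 \<Longrightarrow> \<exists>p\<in>D. dist p a < e"
    using countable_dense_subset by blast
  have univ: "UNIV \<in> sets ?M" using sets.top[of ?M] by (simp add: space_PiM)
  have "(\<Inter>N. \<Inter>k. \<Union>x\<in>D. \<Inter>n\<le>N. {y. y n \<in> ball ((f ^^ n) x) (\<epsilon> + 1 / real (Suc k))}) \<in> sets ?M"
    using sets_coordinate[OF borel_open[OF open_ball]] univ
    by (intro sets.countable_INT'' sets.countable_UN''[OF D(1)]) auto
  moreover have "{y. shadowed f \<epsilon> y}
      = (\<Inter>N. \<Inter>k. \<Union>x\<in>D. \<Inter>n\<le>N. {y. y n \<in> ball ((f ^^ n) x) (\<epsilon> + 1 / real (Suc k))})"
    by (rule set_eqI) (simp add: shadowed_iff_dense_approx[OF D(2)], simp add: Ball_def)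
  ultimately show ?thesis by simp
qed

lemma sets_Sh: "Sh f y0 d \<epsilon> \<in> sets (Pi\<^sub>M UNIV (\<lambda>_. borel))"
proof -
  let ?M = "Pi\<^sub>M UNIV (\<lambda>_. borel :: 'a measure)"
  obtain D :: "'a set" where D: "countable D" "\<And>a e. e > 0 \<Longrightarrow> \<exists>p\<in>D. dist p a < e"
    using countable_dense_subset by blast
  have f: "f \<in> borel_measurable borel" by (rule borel_measurable_continuous_onI[OF continuous_f])
  have "{y. dist (y (Suc n)) (f (y n)) \<le> d} \<in> sets ?M" for n
    using sets_dist_le_of_countable_dense[OF D, of "\<lambda>y. y (Suc n)" ?M "\<lambda>y. f (y n)" d]
    by (simp add: space_PiM measurable_compose[OF measurable_component_singleton[of n UNIV "\<lambda>_. borel"] f])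
  then have "(\<Inter>n. {y. dist (y (Suc n)) (f (y n)) \<le> d}) \<in> sets ?M"
    using sets.top[of ?M] by (intro sets.countable_INT'') (auto simp: space_PiM)
  moreover have "Sh f y0 d \<epsilon>
      = {y. y 0 \<in> {y0}} \<inter> (\<Inter>n. {y. dist (y (Suc n)) (f (y n)) \<le> d}) \<inter> {y. shadowed f \<epsilon> y}"
    unfolding Sh_def Omega_def is_pseudotrajectory_def by blast
  ultimately show ?thesis using sets_coordinate[of "{y0}" 0] sets_shadowed by (auto intro: sets.Int)
qed

end

section \<open>Attractors\<close>

lemma nat_block_induct:
  fixes P Q :: "nat \<Rightarrow> bool"
  assumes "0 < N" "P 0" "\<And>m. P m \<Longrightarrow> P (m + N) \<and> (\<forall>j\<le>N. Q (m + j))"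
  shows "Q n"
proof -
  have P: "P (k * N)" for k
  proof (induction k)
    case (Suc k)
    then show ?case using assms(3)[OF Suc.IH] by (simp add: add.commute)
  qed (use assms(2) in simp)
  have "n = n div N * N + n mod N" "n mod N \<le> N" using assms(1) by (simp_all add: less_imp_le)
  then show ?thesis using assms(3)[OF P[of "n div N"]] by metis
qed

locale attractor_dynamics = compact_dynamics f for f :: "'a::metric_space \<Rightarrow> 'a" +
  fixes \<Lambda> U :: "'a set"
  assumes compact_\<Lambda>: "compact \<Lambda>" and image_\<Lambda>: "f ` \<Lambda> = \<Lambda>" and transitive: "transitive_set f \<Lambda>"
    and open_U: "open U" and \<Lambda>_subset_U: "\<Lambda> \<subseteq> U" and Inter_funpow_image_U: "(\<Inter>n. (f ^^ n) ` U) = \<Lambda>"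
begin

definition attracts_uniformly :: "'a set \<Rightarrow> bool" where
  "attracts_uniformly Q \<longleftrightarrow> (\<forall>\<beta>>0. \<exists>N. \<forall>x\<in>Q. \<forall>n\<ge>N. infdist ((f ^^ n) x) \<Lambda> < \<beta>)"

lemma \<Lambda>_nonempty: "\<Lambda> \<noteq> {}"
  using transitive by (auto simp: transitive_set_def)

lemma funpow_image_\<Lambda>: "(f ^^ n) ` \<Lambda> = \<Lambda>"
proof (induction n)
  case (Suc n)
  have "(f ^^ Suc n) ` \<Lambda> = f ` ((f ^^ n) ` \<Lambda>)" by (simp add: image_comp)
  then show ?case using Suc image_\<Lambda> by simp
qed simp

lemma infdist_funpow_upto_less:
  "e > 0 \<Longrightarrow> \<exists>\<delta>>0. \<forall>x j. infdist x \<Lambda> < \<delta> \<longrightarrow> j \<le> J \<longrightarrow> infdist ((f ^^ j) x) \<Lambda> < e"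
proof -
  assume "e > 0"
  then obtain \<delta> where \<delta>: "\<delta> > 0" "\<And>u v j. dist u v < \<delta> \<Longrightarrow> j \<le> J \<Longrightarrow> dist ((f ^^ j) u) ((f ^^ j) v) < e"
    using uniformly_continuous_funpow_upto by blast
  have "infdist ((f ^^ j) x) \<Lambda> < e" if x: "infdist x \<Lambda> < \<delta>" and j: "j \<le> J" for x j
  proof -
    obtain a where a: "a \<in> \<Lambda>" "dist x a < \<delta>" using infdist_lessE[OF x \<Lambda>_nonempty] .
    then have "(f ^^ j) a \<in> \<Lambda>" using funpow_image_\<Lambda> by blast
    then have "infdist ((f ^^ j) x) \<Lambda> \<le> dist ((f ^^ j) x) ((f ^^ j) a)" by (rule infdist_le)
    also have "\<dots> < e" using \<delta>(2) a(2) j by blast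
    finally show ?thesis .
  qed
  then show ?thesis using \<delta>(1) by blast
qed

lemma attraction_window:
  assumes "{x. infdist x \<Lambda> \<le> \<epsilon>} \<subseteq> U" "\<beta> > 0"
  obtains J where "\<And>x n. J \<le> n \<Longrightarrow> (\<And>j. j \<le> J \<Longrightarrow> infdist ((f ^^ (n - j)) x) \<Lambda> \<le> \<epsilon>)
    \<Longrightarrow> infdist ((f ^^ n) x) \<Lambda> < \<beta>"
proof -
  define K where "K = {x. infdist x \<Lambda> \<le> \<epsilon>}"
  \<comment> \<open>The images of the compact set K shrink to \<Lambda>, so finitely many of them already lie in the \<beta>-neighbourhood.\<close>
  have "(\<Inter>j. (f ^^ j) ` K) \<subseteq> (\<Inter>j. (f ^^ j) ` U)" using assms(1) unfolding K_def by blast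
  also have "\<dots> \<subseteq> {x. infdist x \<Lambda> < \<beta>}" using Inter_funpow_image_U assms(2) by auto
  finally have sub: "(\<Inter>j. (f ^^ j) ` K) \<subseteq> {x. infdist x \<Lambda> < \<beta>}" .
  have "closed K" unfolding K_def by (intro closed_Collect_le continuous_on_const continuous_intros)
  then have "closed ((f ^^ j) ` K)" for j by (rule closed_funpow_image)
  moreover have "open {x. infdist x \<Lambda> < \<beta>}" by (intro open_Collect_less continuous_on_const continuous_intros)
  ultimately obtain J where J: "(\<Inter>j\<le>J. (f ^^ j) ` K) \<subseteq> {x. infdist x \<Lambda> < \<beta>}"
    using compact_UNIV_Inter_closed_subset_open[OF compact_UNIV _ _ sub] by blast
  have "infdist ((f ^^ n) x) \<Lambda> < \<beta>"
    if "J \<le> n" and near: "\<And>j. j \<le> J \<Longrightarrow> infdist ((f ^^ (n - j)) x) \<Lambda> \<le> \<epsilon>" for x n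
  proof -
    have "(f ^^ n) x \<in> (f ^^ j) ` K" if "j \<le> J" for j
    proof
      show "(f ^^ n) x = (f ^^ j) ((f ^^ (n - j)) x)"
        using that \<open>J \<le> n\<close> by (metis funpow_add le_add_diff_inverse le_trans comp_apply)
      show "(f ^^ (n - j)) x \<in> K" using near[OF that] unfolding K_def by simp
    qed
    then show ?thesis using J by blast
  qed
  then show ?thesis using that by blast
qed


lemma lyapunov_stable:
  assumes "\<epsilon> > 0" "{x. infdist x \<Lambda> \<le> \<epsilon>} \<subseteq> U"
  obtains \<delta> where "\<delta> > 0" "\<And>x n. infdist x \<Lambda> < \<delta> \<Longrightarrow> infdist ((f ^^ n) x) \<Lambda> < \<epsilon>"
proof -
  obtain \<delta>f where \<delta>f: "\<delta>f > 0" "\<And>z. infdist z \<Lambda> < \<delta>f \<Longrightarrow> infdist (f z) \<Lambda> < \<epsilon>"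
    using infdist_funpow_upto_less[OF assms(1), of 1] by fastforce
  define e1 where "e1 = min \<epsilon> \<delta>f"
  have e1: "e1 > 0" "e1 \<le> \<epsilon>" "e1 \<le> \<delta>f" using \<delta>f(1) assms(1) unfolding e1_def by auto
  obtain J where J: "\<And>x n. J \<le> n \<Longrightarrow> (\<And>j. j \<le> J \<Longrightarrow> infdist ((f ^^ (n - j)) x) \<Lambda> \<le> \<epsilon>)
    \<Longrightarrow> infdist ((f ^^ n) x) \<Lambda> < e1"
    using attraction_window[OF assms(2) e1(1)] by blast
  obtain \<delta> where \<delta>: "\<delta> > 0" "\<And>x j. infdist x \<Lambda> < \<delta> \<Longrightarrow> j \<le> J \<Longrightarrow> infdist ((f ^^ j) x) \<Lambda> < e1"
    using infdist_funpow_upto_less[OF e1(1)] by blast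
  have main: "infdist ((f ^^ n) x) \<Lambda> < e1" if x: "infdist x \<Lambda> < \<delta>" for x n
  proof (induction n rule: less_induct)
    case (less n)
    show ?case
    proof (cases "n \<le> J")
      case True then show ?thesis using \<delta>(2)[OF x] by blast
    next
      case False
      then obtain m where n: "n = Suc m" by (cases n) auto
      have "infdist ((f ^^ (n - j)) x) \<Lambda> \<le> \<epsilon>" for j
      proof (cases j)
        case 0
        have "infdist ((f ^^ m) x) \<Lambda> < \<delta>f" using less[of m] n e1(3) by simp
        then show ?thesis using \<delta>f(2) n 0 by (simp add: less_imp_le)
      next
        case (Suc i)
        then have "infdist ((f ^^ (n - j)) x) \<Lambda> < e1" using less[of "n - j"] n by simp
        then show ?thesis using e1(2) by simp
      qed
      then show ?thesis using J False by simp
    qed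
  qed
  show ?thesis
  proof (rule that[OF \<delta>(1)])
    show "infdist ((f ^^ n) x) \<Lambda> < \<epsilon>" if "infdist x \<Lambda> < \<delta>" for x n
      using main[OF that, of n] e1(2) by linarith
  qed
qed

lemma attracts_uniformly_of_orbits_near:
  assumes "{x. infdist x \<Lambda> \<le> \<epsilon>} \<subseteq> U" and near: "\<And>x n. x \<in> Q \<Longrightarrow> infdist ((f ^^ n) x) \<Lambda> \<le> \<epsilon>"
  shows "attracts_uniformly Q"
  unfolding attracts_uniformly_def
proof (intro allI impI)
  fix \<beta> :: real assume "\<beta> > 0"
  obtain J where "\<And>x n. J \<le> n \<Longrightarrow> (\<And>j. j \<le> J \<Longrightarrow> infdist ((f ^^ (n - j)) x) \<Lambda> \<le> \<epsilon>)
    \<Longrightarrow> infdist ((f ^^ n) x) \<Lambda> < \<beta>"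
    using attraction_window[OF assms(1) \<open>\<beta> > 0\<close>] by blast
  then show "\<exists>N. \<forall>x\<in>Q. \<forall>n\<ge>N. infdist ((f ^^ n) x) \<Lambda> < \<beta>" using near by blast
qed

lemma absorbing_neighbourhood:
  obtains Q \<theta> \<delta> where "compact Q" "attracts_uniformly Q" "\<theta> > 0" "\<delta> > 0"
    "\<And>d z n. d < \<delta> \<Longrightarrow> is_pseudotrajectory f d z \<Longrightarrow> infdist (z 0) \<Lambda> < \<theta> \<Longrightarrow> z n \<in> Q"
proof -
  obtain e0 where e0: "e0 > 0" "{x. infdist x \<Lambda> \<le> e0} \<subseteq> U"
    using infdist_le_subset_open[OF compact_UNIV compact_imp_closed[OF compact_\<Lambda>] \<Lambda>_nonempty open_U \<Lambda>_subset_U] .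
  obtain dA where dA: "dA > 0" "\<And>x n. infdist x \<Lambda> < dA \<Longrightarrow> infdist ((f ^^ n) x) \<Lambda> < e0"
    using lyapunov_stable[OF e0] by blast
  define Q where "Q = {x. infdist x \<Lambda> \<le> dA / 2}"
  have "closed Q" unfolding Q_def by (intro closed_Collect_le continuous_on_const continuous_intros)
  then have "compact Q" using compact_Int_closed[OF compact_UNIV] by simp
  have "infdist ((f ^^ n) x) \<Lambda> \<le> e0" if "x \<in> Q" for x n
    using dA(2)[of x n] dA(1) that unfolding Q_def by simp
  then have "attracts_uniformly Q" by (rule attracts_uniformly_of_orbits_near[OF e0(2)])
  define e2 where "e2 = min (dA / 4) e0"
  have e2: "e2 > 0" "{x. infdist x \<Lambda> \<le> e2} \<subseteq> U" using e0 dA(1) unfolding e2_def by auto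
  obtain d2 where d2: "d2 > 0" "\<And>x n. infdist x \<Lambda> < d2 \<Longrightarrow> infdist ((f ^^ n) x) \<Lambda> < e2"
    using lyapunov_stable[OF e2] by blast
  define \<theta> where "\<theta> = min d2 (dA / 2)"
  have \<theta>: "\<theta> > 0" "\<theta> \<le> d2" "\<theta> \<le> dA / 2" using d2 dA unfolding \<theta>_def by auto
  obtain N0 where N0: "\<And>x n. x \<in> Q \<Longrightarrow> N0 \<le> n \<Longrightarrow> infdist ((f ^^ n) x) \<Lambda> < \<theta> / 2"
    using \<open>attracts_uniformly Q\<close> \<theta>(1) unfolding attracts_uniformly_def by (meson half_gt_zero)
  define N where "N = Suc N0"
  define \<tau> where "\<tau> = min (\<theta> / 2) (dA / 4)"
  have \<tau>: "\<tau> > 0" "\<tau> \<le> \<theta> / 2" "\<tau> \<le> dA / 4" using \<theta> dA unfolding \<tau>_def by auto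
  obtain \<delta> where \<delta>: "\<delta> > 0" "\<And>z j. pseudo_chain f \<delta> N z \<Longrightarrow> j \<le> N \<Longrightarrow> dist (z j) ((f ^^ j) (z 0)) < \<tau>"
    using pseudo_chain_tracks_orbit[OF \<tau>(1)] by blast
  \<comment> \<open>For N steps a pseudo-orbit starting \<theta>-close to \<Lambda> stays \<tau>-close to the true orbit, which stays
    dA/4-close to \<Lambda> and, as N > N0, ends \<theta>/2-close to \<Lambda>: the pseudo-orbit stays in Q and is
    \<theta>-close to \<Lambda> again after N steps.\<close>
  have "z n \<in> Q" if "d < \<delta>" "is_pseudotrajectory f d z" "infdist (z 0) \<Lambda> < \<theta>" for d z n
  proof (rule nat_block_induct[of N "\<lambda>m. infdist (z m) \<Lambda> < \<theta>"])
    fix m assume m: "infdist (z m) \<Lambda> < \<theta>"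
    have "pseudo_chain f \<delta> N (\<lambda>i. z (m + i))" by (rule pseudo_chain_of_pseudotrajectory[OF that(2,1)])
    then have close: "dist (z (m + j)) ((f ^^ j) (z m)) < \<tau>" if "j \<le> N" for j
      using \<delta>(2) that by fastforce
    have "z (m + j) \<in> Q" if "j \<le> N" for j
      using infdist_triangle[of "z (m + j)" \<Lambda> "(f ^^ j) (z m)"] close[OF that] d2(2)[of "z m" j] m \<theta>(2) \<tau>(3)
      unfolding Q_def e2_def by simp
    moreover have "infdist (z (m + N)) \<Lambda> < \<theta>"
      using infdist_triangle[of "z (m + N)" \<Lambda> "(f ^^ N) (z m)"] close[of N] \<tau>(2) N0[of "z m" N] m \<theta>(3)
      unfolding Q_def N_def by simp
    ultimately show "infdist (z (m + N)) \<Lambda> < \<theta> \<and> (\<forall>j\<le>N. z (m + j) \<in> Q)" by blast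
  qed (use that(3) in \<open>simp_all add: N_def\<close>)
  then show ?thesis using that \<open>compact Q\<close> \<open>attracts_uniformly Q\<close> \<theta>(1) \<delta>(1) by blast
qed

lemma trapping_region:
  assumes "y0 \<in> domain_of_attraction f \<Lambda>"
  obtains Q d0 n0 where "compact Q" "attracts_uniformly Q" "d0 > 0"
    "\<And>d z n. d < d0 \<Longrightarrow> z 0 = y0 \<Longrightarrow> is_pseudotrajectory f d z \<Longrightarrow> n0 \<le> n \<Longrightarrow> z n \<in> Q"
proof -
  obtain Q \<theta> \<delta> where Q: "compact Q" "attracts_uniformly Q" "\<theta> > 0" "\<delta> > 0"
    and absorb: "\<And>d z n. d < \<delta> \<Longrightarrow> is_pseudotrajectory f d z \<Longrightarrow> infdist (z 0) \<Lambda> < \<theta> \<Longrightarrow> z n \<in> Q"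
    using absorbing_neighbourhood by blast
  have "(\<lambda>n. infdist ((f ^^ n) y0) \<Lambda>) \<longlonglongrightarrow> 0" using assms unfolding domain_of_attraction_def by simp
  then have "\<forall>\<^sub>F n in sequentially. infdist ((f ^^ n) y0) \<Lambda> < \<theta> / 2"
    using Q(3) by (intro order_tendstoD(2)) auto
  then obtain n0 where n0: "infdist ((f ^^ n0) y0) \<Lambda> < \<theta> / 2"
    by (meson eventually_sequentially order.refl)
  obtain \<delta>0 where \<delta>0: "\<delta>0 > 0" "\<And>z j. pseudo_chain f \<delta>0 n0 z \<Longrightarrow> j \<le> n0 \<Longrightarrow> dist (z j) ((f ^^ j) (z 0)) < \<theta> / 2"
    using pseudo_chain_tracks_orbit[of "\<theta> / 2" n0] Q(3) by auto
  have "z n \<in> Q" if d: "d < min \<delta> \<delta>0" and z: "z 0 = y0" "is_pseudotrajectory f d z" and n: "n0 \<le> n" for d z n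
  proof -
    have "pseudo_chain f \<delta>0 n0 z" using pseudo_chain_of_pseudotrajectory[OF z(2), of \<delta>0 n0 0] d by simp
    then have "infdist (z n0) \<Lambda> < \<theta>"
      using \<delta>0(2)[of z n0] infdist_triangle[of "z n0" \<Lambda> "(f ^^ n0) y0"] n0 z(1) by simp
    moreover have "is_pseudotrajectory f d (\<lambda>i. z (n0 + i))" using z(2) unfolding is_pseudotrajectory_def by simp
    ultimately have "z (n0 + (n - n0)) \<in> Q" using absorb[of d "\<lambda>i. z (n0 + i)" "n - n0"] d by simp
    then show ?thesis using n by simp
  qed
  then show ?thesis using that[OF Q(1,2)] Q(4) \<delta>0(1) by (metis min_less_iff_conj)
qed

lemma orbit_tail_dense:
  assumes "\<Lambda> = closure (range (\<lambda>n. (f ^^ n) r))"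
  shows "\<Lambda> \<subseteq> closure {(f ^^ j) r | j. N \<le> j}"
proof (induction N)
  case 0 then show ?case using assms by (simp add: full_SetCompr_eq)
next
  case (Suc N)
  have "f ` closure {(f ^^ j) r | j. N \<le> j} \<subseteq> closure {(f ^^ j) r | j. Suc N \<le> j}"
  proof (rule image_closure_subset)
    show "f ` {(f ^^ j) r | j. N \<le> j} \<subseteq> closure {(f ^^ j) r | j. Suc N \<le> j}"
      by (force intro: closure_subset[THEN subsetD])
  qed (auto intro: continuous_on_subset[OF continuous_f])
  then show ?case using Suc image_\<Lambda> by blast
qed

lemma chain_reachable_within_\<Lambda>:
  assumes "a \<in> \<Lambda>" "w \<in> \<Lambda>" "\<eta> > 0"
  shows "chain_reachable f \<eta> a w"
proof -
  obtain r where r: "\<Lambda> = closure (range (\<lambda>n. (f ^^ n) r))"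
    using transitive unfolding transitive_set_def by blast
  have "f a \<in> \<Lambda>" using assms(1) image_\<Lambda> by blast
  then have "\<exists>y\<in>range (\<lambda>n. (f ^^ n) r). dist y (f a) < \<eta>"
    using r assms(3) closure_approachable by blast
  then obtain k where k: "dist ((f ^^ k) r) (f a) < \<eta>" by blast
  have "w \<in> closure {(f ^^ j) r | j. Suc k \<le> j}" using orbit_tail_dense[OF r] assms(2) by blast
  then obtain j where j: "Suc k \<le> j" "dist ((f ^^ j) r) w < \<eta>"
    using assms(3) unfolding closure_approachable by blast
  define i where "i = j - Suc k"
  have i: "j = Suc (k + i)" using j(1) unfolding i_def by simp
  have "chain_reachable f \<eta> a ((f ^^ k) r)" using k by (rule chain_reachable_jump)
  moreover have "chain_reachable f \<eta> ((f ^^ k) r) ((f ^^ i) ((f ^^ k) r))"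
    by (rule chain_reachable_orbit[OF assms(3)])
  moreover have "chain_reachable f \<eta> ((f ^^ i) ((f ^^ k) r)) w"
  proof (rule chain_reachable_jump)
    have "f ((f ^^ i) ((f ^^ k) r)) = (f ^^ j) r" using i by (metis funpow_add add.commute comp_apply funpow.simps(2))
    then show "dist w (f ((f ^^ i) ((f ^^ k) r))) < \<eta>" using j(2) by (simp add: dist_commute)
  qed
  ultimately show ?thesis using chain_reachable_trans by blast
qed

lemma chain_reachable_to_\<Lambda>:
  assumes "infdist ((f ^^ Suc m) z) \<Lambda> < \<eta>" "w \<in> \<Lambda>" "\<eta> > 0"
  shows "chain_reachable f \<eta> z w"
proof -
  obtain a where a: "a \<in> \<Lambda>" "dist ((f ^^ Suc m) z) a < \<eta>" using infdist_lessE[OF assms(1) \<Lambda>_nonempty] .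
  have "chain_reachable f \<eta> z ((f ^^ m) z)" by (rule chain_reachable_orbit[OF assms(3)])
  moreover have "chain_reachable f \<eta> ((f ^^ m) z) a" using a(2) by (intro chain_reachable_jump) (simp add: dist_commute)
  moreover have "chain_reachable f \<eta> a w" by (rule chain_reachable_within_\<Lambda>[OF a(1) assms(2,3)])
  ultimately show ?thesis using chain_reachable_trans by blast
qed


lemma tubes_through_chain:
  assumes Q: "compact Q" "attracts_uniformly Q"
    and w: "w 0 \<in> \<Lambda>" "pseudo_chain f \<eta> N w" and "\<eta> > 0" "\<rho> > 0"
  obtains T :: "nat \<Rightarrow> nat \<Rightarrow> 'a" and K L :: nat and S :: "nat \<Rightarrow> nat"
  where "Q \<subseteq> (\<Union>q<K. ball (T q 0) \<rho>)" "\<And>q. q < K \<Longrightarrow> pseudo_chain f \<eta> L (T q)"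
    "\<And>q. q < K \<Longrightarrow> S q + N \<le> L" "\<And>q i. q < K \<Longrightarrow> i \<le> N \<Longrightarrow> T q (S q + i) = w i"
proof -
  obtain N1 where N1: "\<forall>z\<in>Q. \<forall>n\<ge>N1. infdist ((f ^^ n) z) \<Lambda> < \<eta>"
    using Q(2) \<open>\<eta> > 0\<close> unfolding attracts_uniformly_def by blast
  obtain Z where Z: "finite Z" "Z \<subseteq> Q" "Q \<subseteq> (\<Union>z\<in>Z. ball z \<rho>)"
    using seq_compact_imp_totally_bounded[OF compact_imp_seq_compact[OF Q(1)], rule_format, OF \<open>\<rho> > 0\<close>]
    by blast
  have "\<forall>z\<in>Z. \<forall>\<^sub>F L in sequentially.
      \<exists>p s. p 0 = z \<and> pseudo_chain f \<eta> L p \<and> s + N \<le> L \<and> (\<forall>i\<le>N. p (s + i) = w i)"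
  proof
    fix z assume "z \<in> Z"
    then have "infdist ((f ^^ Suc N1) z) \<Lambda> < \<eta>" using N1 Z(2) le_SucI by blast
    from chain_reachable_to_\<Lambda>[OF this w(1) \<open>\<eta> > 0\<close>]
    show "\<forall>\<^sub>F L in sequentially.
        \<exists>p s. p 0 = z \<and> pseudo_chain f \<eta> L p \<and> s + N \<le> L \<and> (\<forall>i\<le>N. p (s + i) = w i)"
      by (rule pseudo_chain_through[OF _ w(2) \<open>\<eta> > 0\<close>])
  qed
  from eventually_ball_finite[OF Z(1) this] obtain L where L: "\<forall>z\<in>Z.
      \<exists>p s. p 0 = z \<and> pseudo_chain f \<eta> L p \<and> s + N \<le> L \<and> (\<forall>i\<le>N. p (s + i) = w i)"
    unfolding eventually_sequentially by blast
  obtain zs where zs: "set zs = Z" using finite_list[OF Z(1)] by blast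
  have "\<forall>q. \<exists>p s. q < length zs \<longrightarrow>
      p 0 = zs ! q \<and> pseudo_chain f \<eta> L p \<and> s + N \<le> L \<and> (\<forall>i\<le>N. p (s + i) = w i)"
    using L zs by (metis nth_mem)
  then obtain T where "\<forall>q. \<exists>s. q < length zs \<longrightarrow>
      T q 0 = zs ! q \<and> pseudo_chain f \<eta> L (T q) \<and> s + N \<le> L \<and> (\<forall>i\<le>N. T q (s + i) = w i)"
    by (rule choice[THEN exE]) blast
  then obtain S where T: "\<And>q. q < length zs \<Longrightarrow>
      T q 0 = zs ! q \<and> pseudo_chain f \<eta> L (T q) \<and> S q + N \<le> L \<and> (\<forall>i\<le>N. T q (S q + i) = w i)"
    by (rule choice[THEN exE]) blast
  have "Q \<subseteq> (\<Union>q<length zs. ball (T q 0) \<rho>)"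
  proof
    fix x assume "x \<in> Q"
    then obtain z where "z \<in> set zs" "x \<in> ball z \<rho>" using Z(3) zs by blast
    then obtain q where "q < length zs" "x \<in> ball (zs ! q) \<rho>" by (metis in_set_conv_nth)
    then show "x \<in> (\<Union>q<length zs. ball (T q 0) \<rho>)" using T by auto
  qed
  then show ?thesis using that[of T "length zs" L S] T by blast
qed

end

section \<open>Random pseudotrajectories\<close>

lemma borel_partition_refining:
  fixes C :: "nat \<Rightarrow> 'a::topological_space set"
  assumes "Q \<in> sets borel" "\<And>q. C q \<in> sets borel" "Q \<subseteq> (\<Union>q<K. C q)"
  obtains D where "\<And>q. D q \<in> sets borel" "\<And>q. D q \<subseteq> C q" "disjoint_family D" "Q = (\<Union>q<K. D q)"
proof
  show "Q \<inter> disjointed C q \<in> sets borel" for q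
    unfolding disjointed_def using assms(1,2) by (intro sets.Int sets.Diff sets.finite_UN) auto
  show "Q \<inter> disjointed C q \<subseteq> C q" for q using disjointed_subset[of C q] by blast
  show "disjoint_family (\<lambda>q. Q \<inter> disjointed C q)"
    using disjoint_family_disjointed[of C] unfolding disjoint_family_on_def by blast
  show "Q = (\<Union>q<K. Q \<inter> disjointed C q)"
    using assms(3) finite_UN_disjointed_eq[of C K] by (auto simp: atLeast0LessThan)
qed

text \<open>Events determined by the path up to time n: those for which random_pt_law states the Markov property.\<close>

definition history_pred :: "nat \<Rightarrow> ((nat \<Rightarrow> 'a::topological_space) \<Rightarrow> bool) \<Rightarrow> bool" where
  "history_pred n \<Phi> \<longleftrightarrow> (\<forall>y y'. (\<forall>i\<le>n. y i = y' i) \<longrightarrow> \<Phi> y = \<Phi> y')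
     \<and> Measurable.pred (Pi\<^sub>M {..n} (\<lambda>_. borel)) \<Phi>"

lemma history_pred_restrict:
  assumes "history_pred n \<Phi>"
  shows "{y. restrict y {..n} \<in> {x \<in> space (Pi\<^sub>M {..n} (\<lambda>_. borel)). \<Phi> x}} = {y. \<Phi> y}"
proof -
  have "\<Phi> (restrict y {..n}) = \<Phi> y" for y using assms unfolding history_pred_def by simp
  then show ?thesis by (auto simp: space_PiM)
qed

lemma history_pred_sets_restrict:
  "history_pred n \<Phi> \<Longrightarrow> {x \<in> space (Pi\<^sub>M {..n} (\<lambda>_. borel)). \<Phi> x} \<in> sets (Pi\<^sub>M {..n} (\<lambda>_. borel))"
  unfolding history_pred_def pred_def by simp

lemma history_pred_sets:
  fixes \<Phi> :: "(nat \<Rightarrow> 'a::topological_space) \<Rightarrow> bool"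
  assumes "history_pred n \<Phi>"
  shows "{y. \<Phi> y} \<in> sets (Pi\<^sub>M UNIV (\<lambda>_. borel))"
proof -
  have "(\<lambda>x. restrict x {..n}) -` {x \<in> space (Pi\<^sub>M {..n} (\<lambda>_. borel)). \<Phi> x} \<inter> space (Pi\<^sub>M UNIV (\<lambda>_. borel))
      \<in> sets (Pi\<^sub>M UNIV (\<lambda>_. borel :: 'a measure))"
    by (rule measurable_sets[OF measurable_restrict_subset history_pred_sets_restrict[OF assms]]) auto
  then show ?thesis using history_pred_restrict[OF assms] by (simp add: space_PiM vimage_def)
qed

lemma history_pred_mono:
  fixes \<Phi> :: "(nat \<Rightarrow> 'a::topological_space) \<Rightarrow> bool"
  assumes "history_pred n \<Phi>" "n \<le> m"
  shows "history_pred m \<Phi>"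
proof -
  have "(\<lambda>x. restrict x {..n}) -` {x \<in> space (Pi\<^sub>M {..n} (\<lambda>_. borel)). \<Phi> x} \<inter> space (Pi\<^sub>M {..m} (\<lambda>_. borel))
      \<in> sets (Pi\<^sub>M {..m} (\<lambda>_. borel :: 'a measure))"
    by (rule measurable_sets[OF measurable_restrict_subset history_pred_sets_restrict[OF assms(1)]])
      (use assms(2) in auto)
  moreover have "(\<lambda>x. restrict x {..n}) -` {x \<in> space (Pi\<^sub>M {..n} (\<lambda>_. borel)). \<Phi> x}
      \<inter> space (Pi\<^sub>M {..m} (\<lambda>_. borel :: 'a measure)) = {x \<in> space (Pi\<^sub>M {..m} (\<lambda>_. borel)). \<Phi> x}"
    using history_pred_restrict[OF assms(1)] by (auto simp: space_PiM)
  moreover have "\<Phi> y = \<Phi> y'" if "\<forall>i\<le>m. y i = y' i" for y y'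
  proof -
    have "\<forall>i\<le>n. y i = y' i" using that assms(2) by simp
    then show ?thesis using assms(1) unfolding history_pred_def by blast
  qed
  ultimately show ?thesis unfolding history_pred_def pred_def by simp
qed

lemma history_pred_component:
  fixes B :: "'a::topological_space set"
  assumes "k \<le> n" "B \<in> sets borel"
  shows "history_pred n (\<lambda>y. y k \<in> B)"
proof -
  have "(\<lambda>y. y k) \<in> measurable (Pi\<^sub>M {..n} (\<lambda>_. borel :: 'a measure)) borel"
    using measurable_component_singleton[of k "{..n}" "\<lambda>_. borel"] assms(1) by simp
  from measurable_sets[OF this assms(2)] assms(1) show ?thesis
    unfolding history_pred_def pred_def by (simp add: Int_def conj_commute vimage_def)
qed

lemma history_pred_conj:
  "history_pred n \<Phi> \<Longrightarrow> history_pred n \<Psi> \<Longrightarrow> history_pred n (\<lambda>y. \<Phi> y \<and> \<Psi> y)"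
  unfolding history_pred_def by (auto intro: pred_intros_logic(3))

lemma history_pred_not: "history_pred n \<Phi> \<Longrightarrow> history_pred n (\<lambda>y. \<not> \<Phi> y)"
  unfolding history_pred_def by (auto intro: pred_intros_logic(2))

lemma history_pred_Ball:
  assumes "finite I" "\<And>i. i \<in> I \<Longrightarrow> history_pred n (P i)"
  shows "history_pred n (\<lambda>y. \<forall>i\<in>I. P i y)"
proof -
  have "P i y = P i y'" if "i \<in> I" "\<forall>j\<le>n. y j = y' j" for i y y'
    using assms(2)[OF that(1)] that(2) unfolding history_pred_def by blast
  then have "(\<forall>i\<in>I. P i y) = (\<forall>i\<in>I. P i y')" if "\<forall>j\<le>n. y j = y' j" for y y'
    using that by blast
  moreover have "Measurable.pred (Pi\<^sub>M {..n} (\<lambda>_. borel)) (\<lambda>y. \<forall>i\<in>I. P i y)"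
    using assms unfolding history_pred_def by (intro pred_intros_finite(3)) auto
  ultimately show ?thesis unfolding history_pred_def by blast
qed

lemma history_pred_Bex:
  assumes "finite I" "\<And>i. i \<in> I \<Longrightarrow> history_pred n (P i)"
  shows "history_pred n (\<lambda>y. \<exists>i\<in>I. P i y)"
proof -
  have "history_pred n (\<lambda>y. \<not> (\<forall>i\<in>I. \<not> P i y))"
    using assms by (intro history_pred_not history_pred_Ball)
  then show ?thesis by simp
qed

lemma history_pred_all_atMost:
  fixes L :: nat
  shows "(\<And>i. i \<le> L \<Longrightarrow> history_pred n (P i)) \<Longrightarrow> history_pred n (\<lambda>y. \<forall>i\<le>L. P i y)"
  using history_pred_Ball[of "{..L}" n P] by (simp add: Ball_def)

lemma history_pred_all_lessThan:
  fixes L :: nat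
  shows "(\<And>i. i < L \<Longrightarrow> history_pred n (P i)) \<Longrightarrow> history_pred n (\<lambda>y. \<forall>i<L. P i y)"
  using history_pred_Ball[of "{..<L}" n P] by (simp add: Ball_def)

lemma history_pred_ex_lessThan:
  fixes L :: nat
  shows "(\<And>i. i < L \<Longrightarrow> history_pred n (P i)) \<Longrightarrow> history_pred n (\<lambda>y. \<exists>i<L. P i y)"
  using history_pred_Bex[of "{..<L}" n P] by (simp add: Bex_def)

lemma history_pred_tube_avoidance:
  fixes K L :: nat and B :: "nat \<Rightarrow> nat \<Rightarrow> 'a::topological_space set"
  assumes "Q \<in> sets borel" "\<And>q i. B q i \<in> sets borel"
  shows "history_pred (n0 + m * Suc L) (\<lambda>y. \<forall>j<m. y (n0 + j * Suc L) \<in> Q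
      \<and> \<not> (\<exists>q<K. \<forall>i\<le>L. y (n0 + j * Suc L + i) \<in> B q i))"
proof (intro history_pred_all_lessThan history_pred_conj history_pred_not)
  fix j assume "j < m"
  then have "Suc j * Suc L \<le> m * Suc L" by (intro mult_le_mono1) simp
  then have index_le: "n0 + j * Suc L + i \<le> n0 + m * Suc L" if "i \<le> L" for i using that by simp
  show "history_pred (n0 + m * Suc L) (\<lambda>y. y (n0 + j * Suc L) \<in> Q)"
    using index_le[of 0] by (intro history_pred_component assms(1)) simp
  show "history_pred (n0 + m * Suc L) (\<lambda>y. \<exists>q<K. \<forall>i\<le>L. y (n0 + j * Suc L + i) \<in> B q i)"
    using index_le by (intro history_pred_ex_lessThan history_pred_all_atMost history_pred_component assms(2))
qed

locale random_pseudotrajectory =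
  fixes \<mu> :: "'a::metric_space measure" and f :: "'a \<Rightarrow> 'a" and y0 :: 'a and d :: real
    and P :: "(nat \<Rightarrow> 'a) measure"
  assumes law: "random_pt_law \<mu> f y0 d P"
begin

sublocale prob_space P
  using law by (simp add: random_pt_law_def)

lemma sets_P: "sets P = sets (Pi\<^sub>M UNIV (\<lambda>_. borel))"
  using law by (simp add: random_pt_law_def)

lemma history_pred_event: "history_pred n \<Phi> \<Longrightarrow> {y. \<Phi> y} \<in> events"
  using history_pred_sets sets_P by blast

lemma markov_step_lower_bound:
  assumes \<Phi>: "history_pred n \<Phi>" and "A \<in> sets borel" "0 \<le> a"
    and lb: "\<And>y. \<Phi> y \<Longrightarrow> a \<le> trans_prob \<mu> f d (y n) A"
  shows "a * measure P {y. \<Phi> y} \<le> measure P {y. \<Phi> y \<and> y (Suc n) \<in> A}"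
proof -
  define C where "C = {x \<in> space (Pi\<^sub>M {..n} (\<lambda>_. borel)). \<Phi> x}"
  have C: "C \<in> sets (Pi\<^sub>M {..n} (\<lambda>_. borel))" unfolding C_def by (rule history_pred_sets_restrict[OF \<Phi>])
  have C_eq: "{y. restrict y {..n} \<in> C} = {y. \<Phi> y}" unfolding C_def by (rule history_pred_restrict[OF \<Phi>])
  have "ennreal a * emeasure P {y. \<Phi> y} = (\<integral>\<^sup>+ y. ennreal a * indicator {y. \<Phi> y} y \<partial>P)"
    by (rule nn_integral_cmult_indicator[OF history_pred_event[OF \<Phi>], symmetric])
  also have "\<dots> \<le> (\<integral>\<^sup>+ y. indicator {y. \<Phi> y} y * ennreal (trans_prob \<mu> f d (y n) A) \<partial>P)"
    using lb by (intro nn_integral_mono) (auto simp: indicator_def ennreal_leI)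
  also have "\<dots> = emeasure P {y. restrict y {..n} \<in> C \<and> y (Suc n) \<in> A}"
    using law C \<open>A \<in> sets borel\<close> C_eq unfolding random_pt_law_def by simp
  also have "{y. restrict y {..n} \<in> C \<and> y (Suc n) \<in> A} = {y. \<Phi> y \<and> y (Suc n) \<in> A}"
    using C_eq by blast
  finally show ?thesis using \<open>0 \<le> a\<close> by (simp add: emeasure_eq_measure ennreal_mult[symmetric])
qed

lemma path_lower_bound:
  assumes \<Phi>: "history_pred t \<Phi>" and B: "\<And>i. B i \<in> sets borel" and "0 \<le> a"
    and lb: "\<And>i x. i < L \<Longrightarrow> x \<in> B i \<Longrightarrow> a \<le> trans_prob \<mu> f d x (B (Suc i))"
  shows "a ^ L * measure P {y. \<Phi> y \<and> y t \<in> B 0} \<le> measure P {y. \<Phi> y \<and> (\<forall>i\<le>L. y (t + i) \<in> B i)}"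
  using lb
proof (induction L)
  case (Suc L)
  define \<Psi> where "\<Psi> y \<longleftrightarrow> \<Phi> y \<and> (\<forall>i\<le>L. y (t + i) \<in> B i)" for y
  have "history_pred (t + L) \<Psi>"
    unfolding \<Psi>_def
    by (intro history_pred_conj history_pred_mono[OF \<Phi>] history_pred_all_atMost history_pred_component B) auto
  then have "a * measure P {y. \<Psi> y} \<le> measure P {y. \<Psi> y \<and> y (Suc (t + L)) \<in> B (Suc L)}"
    by (rule markov_step_lower_bound[OF _ B \<open>0 \<le> a\<close>]) (use Suc.prems in \<open>auto simp: \<Psi>_def\<close>)
  also have "{y. \<Psi> y \<and> y (Suc (t + L)) \<in> B (Suc L)} = {y. \<Phi> y \<and> (\<forall>i\<le>Suc L. y (t + i) \<in> B i)}"
    unfolding \<Psi>_def by (auto simp: le_Suc_eq)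
  finally have "a * measure P {y. \<Psi> y} \<le> measure P {y. \<Phi> y \<and> (\<forall>i\<le>Suc L. y (t + i) \<in> B i)}" .
  moreover have "a ^ L * measure P {y. \<Phi> y \<and> y t \<in> B 0} \<le> measure P {y. \<Psi> y}"
    using Suc unfolding \<Psi>_def by simp
  then have "a * (a ^ L * measure P {y. \<Phi> y \<and> y t \<in> B 0}) \<le> a * measure P {y. \<Psi> y}"
    using \<open>0 \<le> a\<close> by (rule mult_left_mono)
  ultimately show ?case by (simp add: mult.assoc)
qed simp


lemma tube_lower_bound:
  fixes K L :: nat and B :: "nat \<Rightarrow> nat \<Rightarrow> 'a set"
  assumes \<Phi>: "history_pred t \<Phi>" and Q: "Q \<in> sets borel" "Q \<subseteq> (\<Union>q<K. B q 0)"
    and B: "\<And>q i. B q i \<in> sets borel" and "0 \<le> a"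
    and lb: "\<And>q i x. q < K \<Longrightarrow> i < L \<Longrightarrow> x \<in> B q i \<Longrightarrow> a \<le> trans_prob \<mu> f d x (B q (Suc i))"
  shows "a ^ L * measure P {y. \<Phi> y \<and> y t \<in> Q}
    \<le> measure P {y. \<Phi> y \<and> y t \<in> Q \<and> (\<exists>q<K. \<forall>i\<le>L. y (t + i) \<in> B q i)}"
proof -
  obtain D where D: "\<And>q. D q \<in> sets borel" "\<And>q. D q \<subseteq> B q 0" "disjoint_family D" "Q = (\<Union>q<K. D q)"
    using borel_partition_refining[of Q "\<lambda>q. B q 0"] Q B by blast
  define B' where "B' q i = (if i = 0 then D q else B q i)" for q i
  have B': "B' q i \<in> sets borel" "B' q i \<subseteq> B q i" for q i using D B unfolding B'_def by auto
  define F where "F q = {y. \<Phi> y \<and> y t \<in> D q}" for q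
  define E where "E q = {y. \<Phi> y \<and> (\<forall>i\<le>L. y (t + i) \<in> B' q i)}" for q
  have F: "F q \<in> events" for q
    unfolding F_def by (intro history_pred_event[of t] history_pred_conj \<Phi> history_pred_component D(1) order_refl)
  have E: "E q \<in> events" for q unfolding E_def
    by (intro history_pred_event[of "t + L"] history_pred_conj history_pred_mono[OF \<Phi>] history_pred_all_atMost
        history_pred_component B') auto
  have "disjoint_family_on F {..<K}"
    using D(3) unfolding F_def disjoint_family_on_def by blast
  moreover have EF: "E q \<subseteq> F q" for q unfolding E_def F_def B'_def by auto
  ultimately have disjoint_E: "disjoint_family_on E {..<K}" unfolding disjoint_family_on_def by blast
  have "{y. \<Phi> y \<and> y t \<in> Q} = (\<Union>q<K. F q)" using D(4) unfolding F_def by blast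
  then have "a ^ L * measure P {y. \<Phi> y \<and> y t \<in> Q} = (\<Sum>q<K. a ^ L * measure P (F q))"
    using F \<open>disjoint_family_on F {..<K}\<close> by (simp add: finite_measure_finite_Union sum_distrib_left image_subset_iff)
  also have "\<dots> \<le> (\<Sum>q<K. measure P (E q))"
  proof (rule sum_mono)
    fix q assume "q \<in> {..<K}"
    have "a ^ L * measure P {y. \<Phi> y \<and> y t \<in> B' q 0} \<le> measure P {y. \<Phi> y \<and> (\<forall>i\<le>L. y (t + i) \<in> B' q i)}"
      using \<open>q \<in> {..<K}\<close> B'(2) by (intro path_lower_bound[OF \<Phi> B'(1) \<open>0 \<le> a\<close>]) (auto simp: B'_def intro: lb)
    then show "a ^ L * measure P (F q) \<le> measure P (E q)" unfolding E_def F_def B'_def by simp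
  qed
  also have "\<dots> = measure P (\<Union>q<K. E q)"
    using E disjoint_E by (simp add: finite_measure_finite_Union image_subset_iff)
  also have "\<dots> \<le> measure P {y. \<Phi> y \<and> y t \<in> Q \<and> (\<exists>q<K. \<forall>i\<le>L. y (t + i) \<in> B q i)}"
  proof (rule finite_measure_mono)
    show "(\<Union>q<K. E q) \<subseteq> {y. \<Phi> y \<and> y t \<in> Q \<and> (\<exists>q<K. \<forall>i\<le>L. y (t + i) \<in> B q i)}"
      using EF B'(2) D(4) unfolding E_def F_def by blast
    show "{y. \<Phi> y \<and> y t \<in> Q \<and> (\<exists>q<K. \<forall>i\<le>L. y (t + i) \<in> B q i)} \<in> events"
      by (intro history_pred_event[of "t + L"] history_pred_conj history_pred_mono[OF \<Phi>] history_pred_ex_lessThan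
          history_pred_all_atMost history_pred_component Q(1) B) auto
  qed
  finally show ?thesis .
qed

lemma tube_avoidance_decay:
  fixes K L :: nat and B :: "nat \<Rightarrow> nat \<Rightarrow> 'a set"
  assumes Q: "Q \<in> sets borel" "Q \<subseteq> (\<Union>q<K. B q 0)" and B: "\<And>q i. B q i \<in> sets borel"
    and a: "0 \<le> a" "a \<le> 1"
    and lb: "\<And>q i x. q < K \<Longrightarrow> i < L \<Longrightarrow> x \<in> B q i \<Longrightarrow> a \<le> trans_prob \<mu> f d x (B q (Suc i))"
  shows "measure P {y. \<forall>j<m. y (n0 + j * Suc L) \<in> Q
      \<and> \<not> (\<exists>q<K. \<forall>i\<le>L. y (n0 + j * Suc L + i) \<in> B q i)} \<le> (1 - a ^ L) ^ m"
proof (induction m)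
  case (Suc m)
  define t where "t = n0 + m * Suc L"
  define follows where "follows j y \<longleftrightarrow> (\<exists>q<K. \<forall>i\<le>L. y (n0 + j * Suc L + i) \<in> B q i)" for j y
  define G where "G m y \<longleftrightarrow> (\<forall>j<m. y (n0 + j * Suc L) \<in> Q \<and> \<not> follows j y)" for m y
  have G: "history_pred t (G m)"
    unfolding G_def follows_def t_def by (rule history_pred_tube_avoidance[OF Q(1) B])
  define A where "A = {y. G m y \<and> y t \<in> Q}"
  define A' where "A' = {y. G m y \<and> y t \<in> Q \<and> follows m y}"
  have A: "A \<in> events" unfolding A_def
    by (intro history_pred_event[of t] history_pred_conj G history_pred_component Q(1) order_refl)
  have A': "A' \<in> events" unfolding A'_def follows_def
    by (intro history_pred_event[of "t + L"] history_pred_conj history_pred_mono[OF G] history_pred_ex_lessThan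
        history_pred_all_atMost history_pred_component Q(1) B) (auto simp: t_def)
  have "a ^ L * measure P A \<le> measure P A'"
    using G unfolding A_def A'_def follows_def t_def by (rule tube_lower_bound[OF _ Q B a(1) lb])
  moreover have "{y. G (Suc m) y} = A - A'" "A' \<subseteq> A"
    unfolding G_def A_def A'_def t_def by (auto simp: less_Suc_eq)
  ultimately have "measure P {y. G (Suc m) y} \<le> (1 - a ^ L) * measure P A"
    using finite_measure_Diff[OF A A'] by (simp add: algebra_simps)
  also have "\<dots> \<le> (1 - a ^ L) * measure P {y. G m y}"
    using a G unfolding A_def
    by (intro mult_left_mono finite_measure_mono history_pred_event) (auto simp: power_le_one)
  also have "\<dots> \<le> (1 - a ^ L) * (1 - a ^ L) ^ m"
    using Suc a unfolding G_def follows_def by (intro mult_left_mono) (auto simp: power_le_one)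
  finally show ?case unfolding G_def follows_def by simp
qed simp

end

lemma nonneg_le_power_imp_zero:
  fixes x c :: real
  assumes "0 \<le> x" "0 \<le> c" "c < 1" "\<And>m. x \<le> c ^ m"
  shows "x = 0"
proof -
  have "(\<lambda>m. c ^ m) \<longlonglongrightarrow> 0" using assms(2,3) by (intro LIMSEQ_power_zero) simp
  then have "x \<le> 0" using assms(4) by (intro LIMSEQ_le_const) auto
  then show ?thesis using assms(1) by simp
qed

lemma trans_prob_ge_measure_ratio:
  fixes \<mu> :: "'a::metric_space measure"
  assumes "sets \<mu> = sets borel" "finite_measure \<mu>" "emeasure \<mu> (ball (f x) d) > 0"
    and "A \<subseteq> ball (f x) d"
  shows "measure \<mu> A / measure \<mu> UNIV \<le> trans_prob \<mu> f d x A"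
proof -
  interpret finite_measure \<mu> by (rule assms(2))
  have "space \<mu> = UNIV" using sets_eq_imp_space_eq[OF assms(1)] by simp
  then have "measure \<mu> (ball (f x) d) \<le> measure \<mu> UNIV"
    by (intro finite_measure_mono) (simp_all add: assms(1))
  moreover have "measure \<mu> (ball (f x) d) > 0" using assms(3) by (simp add: emeasure_eq_measure)
  moreover have "A \<inter> ball (f x) d = A" using assms(4) by blast
  ultimately show ?thesis unfolding trans_prob_def by (simp add: frac_le)
qed

lemma trans_prob_uniform_lower_bound:
  fixes \<mu> :: "'a::metric_space measure" and T :: "nat \<Rightarrow> nat \<Rightarrow> 'a" and K L :: nat
  assumes \<mu>: "sets \<mu> = sets borel" "finite_measure \<mu>" "\<And>V. open V \<Longrightarrow> V \<noteq> {} \<Longrightarrow> emeasure \<mu> V > 0"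
    and "\<rho> > 0"
    and sub: "\<And>q i x. q < K \<Longrightarrow> i < L \<Longrightarrow> x \<in> ball (T q i) \<rho> \<Longrightarrow> ball (T q (Suc i)) \<rho> \<subseteq> ball (f x) d"
  obtains a where "0 < a" "a \<le> 1"
    "\<And>q i x. q < K \<Longrightarrow> i < L \<Longrightarrow> x \<in> ball (T q i) \<rho> \<Longrightarrow> a \<le> trans_prob \<mu> f d x (ball (T q (Suc i)) \<rho>)"
proof -
  interpret finite_measure \<mu> by (rule \<mu>(2))
  have pos: "measure \<mu> V > 0" if "open V" "V \<noteq> {}" for V
    using \<mu>(3)[OF that] by (simp add: emeasure_eq_measure)
  define m where "m = Min (insert 1 ((\<lambda>(q, i). measure \<mu> (ball (T q i) \<rho>)) ` ({..<K} \<times> {..L})))"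
  have m: "m > 0" unfolding m_def using pos \<open>\<rho> > 0\<close> by (subst Min_gr_iff) auto
  have m_le: "m \<le> measure \<mu> (ball (T q i) \<rho>)" if "q < K" "i \<le> L" for q i
    unfolding m_def using that by (intro Min_le) force+
  define a where "a = min 1 (m / measure \<mu> UNIV)"
  have "measure \<mu> UNIV > 0" using pos[of UNIV] by simp
  have "a \<le> trans_prob \<mu> f d x (ball (T q (Suc i)) \<rho>)" if "q < K" "i < L" "x \<in> ball (T q i) \<rho>" for q i x
  proof -
    have "emeasure \<mu> (ball (f x) d) > 0"
      using \<mu>(3)[of "ball (f x) d"] sub[OF that] \<open>\<rho> > 0\<close> by (metis centre_in_ball empty_iff open_ball subset_eq)
    then have "measure \<mu> (ball (T q (Suc i)) \<rho>) / measure \<mu> UNIV \<le> trans_prob \<mu> f d x (ball (T q (Suc i)) \<rho>)"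
      by (intro trans_prob_ge_measure_ratio[OF \<mu>(1,2)] sub[OF that])
    moreover have "m / measure \<mu> UNIV \<le> measure \<mu> (ball (T q (Suc i)) \<rho>) / measure \<mu> UNIV"
      using m_le[of q "Suc i"] that \<open>measure \<mu> UNIV > 0\<close> by (simp add: divide_right_mono)
    ultimately show ?thesis unfolding a_def by linarith
  qed
  moreover have "0 < a" "a \<le> 1" using m \<open>measure \<mu> UNIV > 0\<close> unfolding a_def by auto
  ultimately show ?thesis using that by blast
qed

context attractor_dynamics
begin

lemma Sh_null:
  assumes law: "random_pt_law \<mu> f y0 d P"
    and \<mu>: "sets \<mu> = sets borel" "finite_measure \<mu>" "\<And>V. open V \<Longrightarrow> V \<noteq> {} \<Longrightarrow> emeasure \<mu> V > 0"
    and Q: "compact Q" "attracts_uniformly Q"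
    and trapped: "\<And>z n. z 0 = y0 \<Longrightarrow> is_pseudotrajectory f d z \<Longrightarrow> n0 \<le> n \<Longrightarrow> z n \<in> Q"
    and w: "w 0 \<in> \<Lambda>" "pseudo_chain f \<eta> N w" "\<not> shadowed_upto f (2 * \<epsilon>) N w"
    and "0 < \<epsilon>" "0 < \<eta>" "\<eta> < d"
  shows "Sh f y0 d \<epsilon> \<in> sets P \<and> emeasure P (Sh f y0 d \<epsilon>) = 0"
proof -
  interpret random_pseudotrajectory \<mu> f y0 d P by (rule random_pseudotrajectory.intro[OF law])
  have Sh: "Sh f y0 d \<epsilon> \<in> events" using sets_Sh sets_P by simp
  obtain \<rho>0 where \<rho>0: "\<rho>0 > 0" "\<And>\<rho> L p i x. \<rho> \<le> \<rho>0 \<Longrightarrow> pseudo_chain f \<eta> L p \<Longrightarrow> i < L \<Longrightarrow>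
    x \<in> ball (p i) \<rho> \<Longrightarrow> ball (p (Suc i)) \<rho> \<subseteq> ball (f x) d"
    using pseudo_chain_tube_step[OF \<open>\<eta> < d\<close>] by blast
  define \<rho> where "\<rho> = min \<rho>0 \<epsilon>"
  have \<rho>: "\<rho> > 0" "\<rho> \<le> \<rho>0" "\<rho> \<le> \<epsilon>" using \<rho>0(1) \<open>0 < \<epsilon>\<close> unfolding \<rho>_def by auto
  obtain T :: "nat \<Rightarrow> nat \<Rightarrow> 'a" and K L :: nat and S :: "nat \<Rightarrow> nat"
    where cover: "Q \<subseteq> (\<Union>q<K. ball (T q 0) \<rho>)" and T: "\<And>q. q < K \<Longrightarrow> pseudo_chain f \<eta> L (T q)"
    and S: "\<And>q. q < K \<Longrightarrow> S q + N \<le> L" "\<And>q i. q < K \<Longrightarrow> i \<le> N \<Longrightarrow> T q (S q + i) = w i"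
    using tubes_through_chain[OF Q w(1,2) \<open>0 < \<eta>\<close> \<rho>(1)] by blast
  have sub: "ball (T q (Suc i)) \<rho> \<subseteq> ball (f x) d" if "q < K" "i < L" "x \<in> ball (T q i) \<rho>" for q i x
    using \<rho>0(2)[OF \<rho>(2) T[OF that(1)] that(2,3)] .
  obtain a where a: "0 < a" "a \<le> 1"
    "\<And>q i x. q < K \<Longrightarrow> i < L \<Longrightarrow> x \<in> ball (T q i) \<rho> \<Longrightarrow> a \<le> trans_prob \<mu> f d x (ball (T q (Suc i)) \<rho>)"
    using trans_prob_uniform_lower_bound[where f = f and d = d and T = T and K = K and L = L, OF \<mu> \<rho>(1) sub]
    by blast
  define G where "G m = {y. \<forall>j<m. y (n0 + j * Suc L) \<in> Q
      \<and> \<not> (\<exists>q<K. \<forall>i\<le>L. y (n0 + j * Suc L + i) \<in> ball (T q i) \<rho>)}" for m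
  have Q_borel: "Q \<in> sets borel" using Q(1) by (simp add: borel_closed compact_imp_closed)
  have "G m \<in> events" for m
    unfolding G_def by (rule history_pred_event, rule history_pred_tube_avoidance[OF Q_borel]) simp
  moreover have "measure P (G m) \<le> (1 - a ^ L) ^ m" for m
    unfolding G_def using Q_borel cover a by (intro tube_avoidance_decay) auto
  \<comment> \<open>Every tube passes \<rho>-close to the chain w, which no orbit 2\<epsilon>-shadows.\<close>
  moreover have "Sh f y0 d \<epsilon> \<subseteq> G m" for m
  proof
    fix y assume "y \<in> Sh f y0 d \<epsilon>"
    then have y: "y 0 = y0" "is_pseudotrajectory f d y" "shadowed f \<epsilon> y" unfolding Sh_def Omega_def by auto
    have "y (n0 + j * Suc L) \<in> Q" for j using trapped[OF y(1,2)] by simp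
    moreover have "\<not> (\<forall>i\<le>L. y (n0 + j * Suc L + i) \<in> ball (T q i) \<rho>)" if "q < K" for q j
      using not_follows_of_unshadowable[OF y(3) w(3) \<rho>(3) S(1)[OF that] S(2)[OF that]] by simp
    ultimately show "y \<in> G m" unfolding G_def by blast
  qed
  ultimately have "measure P (Sh f y0 d \<epsilon>) \<le> (1 - a ^ L) ^ m" for m
    using finite_measure_mono[of "Sh f y0 d \<epsilon>" "G m"] order_trans by blast
  moreover have "0 < a ^ L" "a ^ L \<le> 1" using a by (simp_all add: power_le_one)
  ultimately have "measure P (Sh f y0 d \<epsilon>) = 0"
    by (intro nonneg_le_power_imp_zero[of _ "1 - a ^ L"]) auto
  then show ?thesis using Sh by (simp add: emeasure_eq_measure)
qed

lemma Sh_null_near_attractor: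
  assumes \<mu>: "sets \<mu> = sets borel" "finite_measure \<mu>" "\<And>V. open V \<Longrightarrow> V \<noteq> {} \<Longrightarrow> emeasure \<mu> V > 0"
    and y0: "y0 \<in> domain_of_attraction f \<Lambda>" and "\<epsilon> > 0"
    and witness: "\<And>\<eta>. \<eta> > 0 \<Longrightarrow> \<exists>w N. w 0 \<in> \<Lambda> \<and> pseudo_chain f \<eta> N w \<and> \<not> shadowed_upto f (2 * \<epsilon>) N w"
  shows "\<exists>d0>0. \<forall>d. 0 < d \<and> d < d0 \<longrightarrow> (\<forall>P. random_pt_law \<mu> f y0 d P \<longrightarrow>
    Sh f y0 d \<epsilon> \<in> sets P \<and> emeasure P (Sh f y0 d \<epsilon>) = 0)"
proof -
  obtain Q d0 n0 where Q: "compact Q" "attracts_uniformly Q" "d0 > 0"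
    and trapped: "\<And>d z n. d < d0 \<Longrightarrow> z 0 = y0 \<Longrightarrow> is_pseudotrajectory f d z \<Longrightarrow> n0 \<le> n \<Longrightarrow> z n \<in> Q"
    using trapping_region[OF y0] by blast
  have "Sh f y0 d \<epsilon> \<in> sets P \<and> emeasure P (Sh f y0 d \<epsilon>) = 0"
    if d: "0 < d" "d < d0" and law: "random_pt_law \<mu> f y0 d P" for d P
  proof -
    obtain w N where w: "w 0 \<in> \<Lambda>" "pseudo_chain f (d / 2) N w" "\<not> shadowed_upto f (2 * \<epsilon>) N w"
      using witness[of "d / 2"] d(1) by auto
    have trap: "z n \<in> Q" if "z 0 = y0" "is_pseudotrajectory f d z" "n0 \<le> n" for z n
      using trapped[OF d(2) that] .
    show ?thesis
      by (rule Sh_null[where ?n0.0 = n0 and Q = Q and w = w and N = N and \<eta> = "d / 2"])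
        (use law \<mu> Q(1,2) trap w \<open>\<epsilon> > 0\<close> d(1) in auto)
  qed
  then show ?thesis using Q(3) by blast
qed

end

theorem theorem2:
  fixes \<mu> :: "'a::metric_space measure" and f :: "'a \<Rightarrow> 'a" and \<Lambda> :: "'a set"
  assumes "compact (UNIV :: 'a set)"
    and "sets \<mu> = sets borel" and "finite_measure \<mu>"
    and "\<And>U. open U \<Longrightarrow> U \<noteq> {} \<Longrightarrow> emeasure \<mu> U > 0"
    and "\<exists>g. homeomorphism UNIV UNIV f g"
    and "is_attractor f \<Lambda>" and "transitive_set f \<Lambda>"
    and "\<not> shadowing_on f \<Lambda>"
  shows "\<exists>eps0>0. \<forall>y0 \<in> domain_of_attraction f \<Lambda>. \<exists>d0>0. \<forall>d. 0 < d \<and> d < d0 \<longrightarrow>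
           (\<forall>P. random_pt_law \<mu> f y0 d P \<longrightarrow>
              Sh f y0 d eps0 \<in> sets P \<and> emeasure P (Sh f y0 d eps0) = 0)"
proof -
  have "continuous_on UNIV f" using assms(5) by (auto simp: homeomorphism_def)
  moreover obtain U where "open U" "\<Lambda> \<subseteq> U" "(\<Inter>n. (f ^^ n) ` U) = \<Lambda>"
    using assms(6) unfolding is_attractor_def by blast
  ultimately interpret attractor_dynamics f \<Lambda> U
    using assms(1,6,7) by unfold_locales (auto simp: is_attractor_def)
  obtain \<epsilon> where "\<epsilon> > 0"
    and witness: "\<And>\<eta>. \<eta> > 0 \<Longrightarrow> \<exists>w N. w 0 \<in> \<Lambda> \<and> pseudo_chain f \<eta> N w \<and> \<not> shadowed_upto f \<epsilon> N w"
    using not_shadowing_on_finite_witness[OF assms(8)] by blast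
  have "\<exists>d0>0. \<forall>d. 0 < d \<and> d < d0 \<longrightarrow> (\<forall>P. random_pt_law \<mu> f y0 d P \<longrightarrow>
      Sh f y0 d (\<epsilon> / 2) \<in> sets P \<and> emeasure P (Sh f y0 d (\<epsilon> / 2)) = 0)"
    if "y0 \<in> domain_of_attraction f \<Lambda>" for y0
    by (rule Sh_null_near_attractor) (use assms(2-4) that \<open>\<epsilon> > 0\<close> witness in auto)
  then show ?thesis using \<open>\<epsilon> > 0\<close> by (intro exI[of _ "\<epsilon> / 2"]) auto
qed

end
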